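(* Consider the closed-loop system described in the context. For every $k\ge0$, $\tau_p\ge0$, $x_0\in\mathbb{R}^n$, $\delta>0$, $u_0\in U_\delta$ and every constant $r\in\mathbb{R}$ there exists $\tau\in(0,\infty]$ such that the closed-loop system has a unique state trajectory $(x,u_I)$ defined on $[0,\tau)$ with $x(0)=x_0$ and $u_I(0)=u_0$. If $\tau$ is finite and maximal (i.e., the state trajectory cannot be continued beyond $\tau$), then $\limsup_{t\to\tau}\|x(t)\|=\infty$.
   Context: Plant: $\dot x=f(x,u)$, $y=g(x)$, with $f\in C^2(\mathbb{R}^n\times\mathbb{R};\mathbb{R}^n)$ and $g:\mathbb{R}^n\to\mathbb{R}$ locally Lipschitz (Lipschitz on every compact set). Fix real numbers $u_{min}<u_{max}$, $U=[u_{min},u_{max}]$ and $U_\delta=[u_{min}-\delta,u_{max}+\delta]$. For $w\in\mathbb{R}$, $w^+=\max\{w,0\}$, $w^-=\min\{w,0\}$. Saturating integrator with input $w$ and state $u_I$: $\dot u_I=\mathscr{S}(u_I,w)$, where $\mathscr{S}(u_I,w)=w^+$ if $u_I\le u_{min}$, $w$ if $u_I\in(u_{min},u_{max})$, $w^-$ if $u_I\ge u_{max}$. For polynomial inputs the state trajectory is defined classically; two trajectories $u_1,u_2$ with inputs $w_1,w_2$ satisfy $|u_2(t)-u_1(t)|\le|u_2(0)-u_1(0)|+\int_0^t|w_2-w_1|\,d\sigma$, and for general $w\in L^1[0,t]$ the trajectory is defined by continuous extension. The closed-loop system (with gains $k$, $\tau_p$ and constant reference $r$) is $\dot x=f(x,u_I+\tau_pk(r-g(x)))$,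 $\dot u_I=\mathscr{S}(u_I,k(r-g(x)))$, where the second equation means that $u_I$ is the state trajectory of the saturating integrator driven by $w=k(r-g(x))$. *)

theory Defs
  imports "HOL-Analysis.Analysis" "HOL-Computational_Algebra.Polynomial"
begin

definition sat_S :: "real \<Rightarrow> real \<Rightarrow> real \<Rightarrow> real \<Rightarrow> real" where
  "sat_S umin umax v w =
     (if v \<le> umin then max w 0 else if v < umax then w else min w 0)"

definition sat_poly_traj ::
  "real \<Rightarrow> real \<Rightarrow> real \<Rightarrow> real \<Rightarrow> (real \<Rightarrow> real) \<Rightarrow> (real \<Rightarrow> real) \<Rightarrow> bool" where
  "sat_poly_traj umin umax T u0 p v \<longleftrightarrow>
     v 0 = u0 \<and> continuous_on {0..T} v \<and>
     (\<forall>s\<in>{0..<T}. (v has_real_derivative sat_S umin umax (v s) (p s)) (at s within {s..T}))"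

text \<open>State trajectory on [0,T] for an L^1 input w, defined by continuous extension
  (in the L^1[0,T] topology) of the map from polynomial inputs to their classical
  trajectories (uniform topology on [0,T]).\<close>
definition sat_traj_on ::
  "real \<Rightarrow> real \<Rightarrow> real \<Rightarrow> real \<Rightarrow> (real \<Rightarrow> real) \<Rightarrow> (real \<Rightarrow> real) \<Rightarrow> bool" where
  "sat_traj_on umin umax T u0 w u \<longleftrightarrow>
     w absolutely_integrable_on {0..T} \<and>
     (\<forall>\<epsilon>>0. \<exists>\<eta>>0. \<forall>(q::real poly) v.
        sat_poly_traj umin umax T u0 (poly q) v \<and>
        integral {0..T} (\<lambda>s. \<bar>poly q s - w s\<bar>) < \<eta> \<longrightarrow>
        (\<forall>s\<in>{0..T}. \<bar>v s - u s\<bar> < \<epsilon>))"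

definition cl_traj ::
  "(((real^'n) \<times> real) \<Rightarrow> real^'n) \<Rightarrow> (real^'n \<Rightarrow> real) \<Rightarrow> real \<Rightarrow> real \<Rightarrow>
   real \<Rightarrow> real \<Rightarrow> real \<Rightarrow> real^'n \<Rightarrow> real \<Rightarrow> ereal \<Rightarrow>
   (real \<Rightarrow> real^'n) \<Rightarrow> (real \<Rightarrow> real) \<Rightarrow> bool" where
  "cl_traj f g umin umax k \<tau>p r x0 u0 \<tau> x u \<longleftrightarrow>
     x 0 = x0 \<and> u 0 = u0 \<and>
     (\<forall>t. 0 \<le> t \<and> ereal t < \<tau> \<longrightarrow>
        (x has_vector_derivative f (x t, u t + \<tau>p * k * (r - g (x t))))
          (at t within {s. 0 \<le> s \<and> ereal s < \<tau>})) \<and>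
     (\<forall>t. 0 \<le> t \<and> ereal t < \<tau> \<longrightarrow>
        sat_traj_on umin umax t u0 (\<lambda>s. k * (r - g (x s))) u)"

end

theory Submission
  imports Defs
begin

text \<open>Classical trajectories of the saturating integrator depend L1-Lipschitz on their input,
  \<open>\<bar>v1 t - v2 t\<bar> \<le> \<bar>v1 0 - v2 0\<bar> + \<integral>[0,t] \<bar>p1 - p2\<bar>\<close>, because \<open>sat_S\<close> is nonincreasing in the
  state and 1-Lipschitz in the input. Hence the continuous extension to continuous inputs exists
  (as a uniform limit of classical trajectories for polynomial inputs), is unique and inherits the
  estimate. Substituting it, the closed loop becomes an integral equation
  \<open>x t = x0 + \<integral>[0,t] F(x)\<close> whose right-hand side is causal and locally Lipschitz for the sup
  norm. Banach's fixed point theorem gives local solutions and a stepwise contraction estimate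
  gives uniqueness. A solution that stays bounded up to a finite time \<open>T\<close> is Lipschitz, so it
  extends to \<open>[0,T]\<close> and then beyond \<open>T\<close>; at a finite maximal time the state must therefore
  blow up.\<close>

section \<open>Right Dini derivatives\<close>

lemma eventually_at_within_right: "\<forall>\<^sub>F t in at s within {s..b::real}. s < t"
  unfolding eventually_at_filter by (rule always_eventually) auto

lemma has_real_derivative_right_error:
  fixes F :: "real \<Rightarrow> real"
  assumes "(F has_real_derivative D) (at s within {s..b})" and "e > 0"
  shows "\<forall>\<^sub>F t in at s within {s..b}. \<bar>F t - F s - D * (t - s)\<bar> \<le> e * (t - s)"
proof -
  have "\<forall>\<^sub>F t in at s within {s..b}. dist ((F t - F s) / (t - s)) D < e"
    using assms has_field_derivative_iff tendstoD by blast
  with eventually_at_within_right show ?thesis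
  proof eventually_elim
    case (elim t)
    have "F t - F s - D * (t - s) = ((F t - F s) / (t - s) - D) * (t - s)"
      using elim by (simp add: field_simps)
    with elim show ?case by (simp add: abs_mult dist_real_def)
  qed
qed

lemma nonincreasing_if_right_Dini_nonpos:
  fixes \<phi> :: "real \<Rightarrow> real"
  assumes cont: "continuous_on {a..b} \<phi>"
    and Dini: "\<And>s e. s \<in> {a..<b} \<Longrightarrow> e > 0 \<Longrightarrow>
                 \<forall>\<^sub>F t in at s within {s..b}. \<phi> t - \<phi> s \<le> e * (t - s)"
    and t: "t \<in> {a..b}"
  shows "\<phi> t \<le> \<phi> a"
proof (rule ccontr)
  assume contr: "\<not> \<phi> t \<le> \<phi> a"
  with t have "a < t" by (cases "a = t") auto
  define e where "e = (\<phi> t - \<phi> a) / (2 * (t - a))"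
  have e: "e > 0" using contr \<open>a < t\<close> by (simp add: e_def)
  define A where "A = {s \<in> {a..t}. \<phi> s \<le> \<phi> a + e * (s - a)}"
  have "closed A" unfolding A_def
    by (rule continuous_on_closed_Collect_le)
       (use t in \<open>auto intro!: continuous_intros continuous_on_subset[OF cont]\<close>)
  moreover have "a \<in> A" and bdd: "bdd_above A"
    using \<open>a < t\<close> by (auto simp: A_def bdd_above_def)
  ultimately have "Sup A \<in> A" using closed_contains_Sup by blast
  define c where "c = Sup A"
  have c: "c \<in> {a..t}" "\<phi> c \<le> \<phi> a + e * (c - a)" using \<open>Sup A \<in> A\<close> by (auto simp: A_def c_def)
  have "c \<noteq> t"
  proof
    assume "c = t"
    moreover have "e * (t - a) = (\<phi> t - \<phi> a) / 2" using \<open>a < t\<close> by (simp add: e_def field_simps)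
    ultimately show False using c contr by simp
  qed
  with c t have "c \<in> {a..<b}" by auto
  then obtain d where d: "d > 0"
    and near: "\<And>s. s \<in> {c..b} \<Longrightarrow> s \<noteq> c \<Longrightarrow> dist s c < d \<Longrightarrow> \<phi> s - \<phi> c \<le> e * (s - c)"
    using Dini[OF _ e] unfolding eventually_at by metis
  define s where "s = min (c + d / 2) t"
  have s: "c < s" "s \<le> t" "dist s c < d" using d c \<open>c \<noteq> t\<close> by (auto simp: s_def dist_real_def)
  with near[of s] c t have "\<phi> s \<le> \<phi> a + e * (s - a)" by (auto simp: algebra_simps)
  with s c have "s \<in> A" by (auto simp: A_def)
  then have "s \<le> c" unfolding c_def using bdd by (rule cSup_upper)
  with s show False by simp
qed

lemma abs_right_Dini_bound:
  fixes d :: "real \<Rightarrow> real"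
  assumes d: "(d has_real_derivative D) (at s within {s..b})" and e: "e > 0"
    and pos: "d s > 0 \<Longrightarrow> D \<le> H" and neg: "d s < 0 \<Longrightarrow> - D \<le> H" and zero: "d s = 0 \<Longrightarrow> \<bar>D\<bar> \<le> H"
  shows "\<forall>\<^sub>F t in at s within {s..b}. \<bar>d t\<bar> - \<bar>d s\<bar> \<le> (H + e) * (t - s)"
proof -
  have err: "\<forall>\<^sub>F t in at s within {s..b}. s < t \<and> \<bar>d t - d s - D * (t - s)\<bar> \<le> e * (t - s)"
    using eventually_at_within_right has_real_derivative_right_error[OF d e] by (rule eventually_conj)
  have lim: "(d \<longlongrightarrow> d s) (at s within {s..b})"
    using DERIV_continuous[OF d] by (simp add: continuous_within)
  consider "d s > 0" | "d s < 0" | "d s = 0" by linarith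
  then show ?thesis
  proof cases
    case 1
    from err order_tendstoD(1)[OF lim 1] show ?thesis
    proof eventually_elim
      case (elim t)
      with pos[OF 1] have "D * (t - s) \<le> H * (t - s)" by (intro mult_right_mono) auto
      with elim 1 show ?case by (simp only: abs_le_iff distrib_right) linarith
    qed
  next
    case 2
    from err order_tendstoD(2)[OF lim 2] show ?thesis
    proof eventually_elim
      case (elim t)
      with neg[OF 2] have "- D * (t - s) \<le> H * (t - s)" by (intro mult_right_mono) auto
      with elim 2 show ?case by (simp only: abs_le_iff distrib_right) linarith
    qed
  next
    case 3
    from err show ?thesis
    proof eventually_elim
      case (elim t)
      with zero[OF 3] have "\<bar>D\<bar> * (t - s) \<le> H * (t - s)" by (intro mult_right_mono) auto
      moreover have "\<bar>D * (t - s)\<bar> = \<bar>D\<bar> * (t - s)" using elim by (simp add: abs_mult)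
      ultimately show ?case using elim 3 by (simp only: abs_le_iff distrib_right) linarith
    qed
  qed
qed

section \<open>Classical trajectories of the saturating integrator\<close>

lemma sat_S_diff_le: "v2 \<le> v1 \<Longrightarrow> sat_S umin umax v1 w1 - sat_S umin umax v2 w2 \<le> \<bar>w1 - w2\<bar>"
  unfolding sat_S_def by auto

lemma sat_S_zero [simp]: "sat_S umin umax v 0 = 0"
  unfolding sat_S_def by auto

lemma sat_S_uminus: "umin < umax \<Longrightarrow> sat_S (- umax) (- umin) (- v) (- w) = - sat_S umin umax v w"
  unfolding sat_S_def by auto

lemma integral_le_integral_subinterval:
  fixes h :: "real \<Rightarrow> real"
  assumes "continuous_on {a..b} h" "\<And>t. t \<in> {a..b} \<Longrightarrow> 0 \<le> h t" "s \<in> {a..b}"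
  shows "integral {a..s} h \<le> integral {a..b} h"
  by (rule integral_subset_le)
     (use assms in \<open>auto intro!: integrable_continuous_real continuous_on_subset[OF assms(1)]\<close>)

definition sat_classical_traj ::
  "real \<Rightarrow> real \<Rightarrow> real \<Rightarrow> real \<Rightarrow> real \<Rightarrow> (real \<Rightarrow> real) \<Rightarrow> (real \<Rightarrow> real) \<Rightarrow> bool" where
  "sat_classical_traj umin umax a b u0 p v \<longleftrightarrow>
     v a = u0 \<and> continuous_on {a..b} v \<and>
     (\<forall>s\<in>{a..<b}. (v has_real_derivative sat_S umin umax (v s) (p s)) (at s within {s..b}))"

lemma sat_poly_traj_iff_classical:
  "sat_poly_traj umin umax T u0 p v \<longleftrightarrow> sat_classical_traj umin umax 0 T u0 p v"
  unfolding sat_poly_traj_def sat_classical_traj_def by simp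

lemma sat_classical_traj_restrict:
  assumes "sat_classical_traj umin umax a b u0 p v" and "t \<le> b"
  shows "sat_classical_traj umin umax a t u0 p v"
  unfolding sat_classical_traj_def
proof (intro conjI ballI)
  show "v a = u0" "continuous_on {a..t} v"
    using assms by (auto simp: sat_classical_traj_def intro: continuous_on_subset)
  fix s assume "s \<in> {a..<t}"
  with assms have "(v has_real_derivative sat_S umin umax (v s) (p s)) (at s within {s..b})"
    by (simp add: sat_classical_traj_def)
  then show "(v has_real_derivative sat_S umin umax (v s) (p s)) (at s within {s..t})"
    by (rule DERIV_subset) (use assms in auto)
qed

lemma sat_classical_traj_L1_contraction:
  assumes v1: "sat_classical_traj umin umax a b u1 p1 v1"
    and v2: "sat_classical_traj umin umax a b u2 p2 v2"
    and p1: "continuous_on {a..b} p1" and p2: "continuous_on {a..b} p2" and t: "t \<in> {a..b}"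
  shows "\<bar>v1 t - v2 t\<bar> \<le> \<bar>u1 - u2\<bar> + integral {a..t} (\<lambda>\<sigma>. \<bar>p1 \<sigma> - p2 \<sigma>\<bar>)"
proof -
  define h where "h \<sigma> = \<bar>p1 \<sigma> - p2 \<sigma>\<bar>" for \<sigma>
  have h: "continuous_on {a..b} h" unfolding h_def by (intro continuous_intros p1 p2)
  define \<phi> where "\<phi> t = \<bar>v1 t - v2 t\<bar> - integral {a..t} h" for t
  have "\<phi> t \<le> \<phi> a"
  proof (rule nonincreasing_if_right_Dini_nonpos[OF _ _ t])
    show "continuous_on {a..b} \<phi>"
      using v1 v2 unfolding \<phi>_def sat_classical_traj_def
      by (intro continuous_intros indefinite_integral_continuous_1 integrable_continuous_real h) auto
    fix s e assume s: "s \<in> {a..<b}" and e: "(e::real) > 0"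
    define D where "D = sat_S umin umax (v1 s) (p1 s) - sat_S umin umax (v2 s) (p2 s)"
    have "((\<lambda>t. v1 t - v2 t) has_real_derivative D) (at s within {s..b})"
      using v1 v2 s unfolding D_def sat_classical_traj_def by (intro DERIV_diff) auto
    then have dist: "\<forall>\<^sub>F t in at s within {s..b}.
        \<bar>v1 t - v2 t\<bar> - \<bar>v1 s - v2 s\<bar> \<le> (h s + e / 2) * (t - s)"
    proof (rule abs_right_Dini_bound)
      show "v1 s - v2 s > 0 \<Longrightarrow> D \<le> h s" "v1 s - v2 s < 0 \<Longrightarrow> - D \<le> h s"
        "v1 s - v2 s = 0 \<Longrightarrow> \<bar>D\<bar> \<le> h s"
        using sat_S_diff_le[of "v2 s" "v1 s" umin umax "p1 s" "p2 s"]
          sat_S_diff_le[of "v1 s" "v2 s" umin umax "p2 s" "p1 s"]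
        unfolding D_def h_def by (auto simp: abs_le_iff abs_minus_commute)
    qed (use e in simp)
    have "((\<lambda>t. integral {a..t} h) has_real_derivative h s) (at s within {a..b})"
      using s by (intro integral_has_real_derivative h) auto
    then have "((\<lambda>t. integral {a..t} h) has_real_derivative h s) (at s within {s..b})"
      by (rule DERIV_subset) (use s in auto)
    then have int: "\<forall>\<^sub>F t in at s within {s..b}.
        \<bar>integral {a..t} h - integral {a..s} h - h s * (t - s)\<bar> \<le> e / 2 * (t - s)"
      by (rule has_real_derivative_right_error) (use e in simp)
    from dist int show "\<forall>\<^sub>F t in at s within {s..b}. \<phi> t - \<phi> s \<le> e * (t - s)"
    proof eventually_elim
      case (elim t)
      have "e * (t - s) = e / 2 * (t - s) + e / 2 * (t - s)" by (simp add: field_simps)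
      with elim show ?case unfolding \<phi>_def by (simp only: abs_le_iff distrib_right) linarith
    qed
  qed
  moreover have "v1 a = u1" "v2 a = u2" using v1 v2 by (auto simp: sat_classical_traj_def)
  ultimately show ?thesis unfolding \<phi>_def h_def by simp
qed

lemma sat_classical_traj_exists_nonneg:
  assumes um: "umin < umax" and p: "continuous_on {a..b} p"
    and nonneg: "\<And>t. t \<in> {a..b} \<Longrightarrow> 0 \<le> p t"
  shows "\<exists>v. sat_classical_traj umin umax a b u0 p v"
proof -
  define h where "h t = u0 + integral {a..t} p" for t
  define c where "c = max u0 umax"
  have h_mono: "h s \<le> h t" if "a \<le> s" "s \<le> t" "t \<le> b" for s t
    unfolding h_def using that
    by (auto intro!: integral_le_integral_subinterval continuous_on_subset[OF p] nonneg)
  have "sat_classical_traj umin umax a b u0 p (\<lambda>t. min c (h t))"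
    unfolding sat_classical_traj_def
  proof (intro conjI ballI)
    show "min c (h a) = u0" by (simp add: h_def c_def)
    show "continuous_on {a..b} (\<lambda>t. min c (h t))" unfolding h_def
      by (intro continuous_intros indefinite_integral_continuous_1 integrable_continuous_real p)
    fix s assume s: "s \<in> {a..<b}"
    have "(h has_real_derivative p s) (at s within {a..b})"
      unfolding h_def using s by (auto intro!: derivative_eq_intros integral_has_real_derivative p)
    then have dh: "(h has_real_derivative p s) (at s within {s..b})"
      by (rule DERIV_subset) (use s in auto)
    show "((\<lambda>t. min c (h t)) has_real_derivative sat_S umin umax (min c (h s)) (p s))
        (at s within {s..b})"
    proof (cases "h s < c")
      case True
      \<comment> \<open>Here \<open>c = umax\<close>, since the unsaturated integral never drops below \<open>u0\<close>.\<close>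
      have "h s < umax" using True h_mono[of a s] s by (auto simp: c_def h_def)
      then have "sat_S umin umax (min c (h s)) (p s) = p s"
        using True nonneg[of s] s by (auto simp: sat_S_def)
      moreover have "\<forall>\<^sub>F t in at s within {s..b}. min c (h t) = h t"
        using order_tendstoD(2)[OF DERIV_continuous[OF dh, unfolded continuous_within] True]
        by eventually_elim simp
      ultimately show ?thesis using dh True by (simp add: has_field_derivative_cong_eventually)
    next
      case False
      then have "sat_S umin umax (min c (h s)) (p s) = 0"
        using um nonneg[of s] s by (auto simp: sat_S_def c_def)
      moreover have "min c (h t) = c" if "t \<in> {s..b}" for t
        using False h_mono[of s t] s that by auto
      then have "\<forall>\<^sub>F t in at s within {s..b}. min c (h t) = c"
        unfolding eventually_at_filter by (intro always_eventually) blast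
      ultimately show ?thesis using False by (simp add: has_field_derivative_cong_eventually)
    qed
  qed
  then show ?thesis by blast
qed

lemma sat_classical_traj_uminus:
  assumes um: "umin < umax" and v: "sat_classical_traj (- umax) (- umin) a b (- u0) (\<lambda>t. - p t) v"
  shows "sat_classical_traj umin umax a b u0 p (\<lambda>t. - v t)"
  unfolding sat_classical_traj_def
proof (intro conjI ballI)
  show "- v a = u0" "continuous_on {a..b} (\<lambda>t. - v t)"
    using v by (auto simp: sat_classical_traj_def intro: continuous_intros)
  fix s assume "s \<in> {a..<b}"
  with v have "(v has_real_derivative sat_S (- umax) (- umin) (v s) (- p s)) (at s within {s..b})"
    by (simp add: sat_classical_traj_def)
  then show "((\<lambda>t. - v t) has_real_derivative sat_S umin umax (- v s) (p s)) (at s within {s..b})"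
    using DERIV_minus sat_S_uminus[OF um, of "- v s" "p s"] by fastforce
qed

lemma sat_classical_traj_exists_nonpos:
  assumes um: "umin < umax" and p: "continuous_on {a..b} p"
    and nonpos: "\<And>t. t \<in> {a..b} \<Longrightarrow> p t \<le> 0"
  shows "\<exists>v. sat_classical_traj umin umax a b u0 p v"
proof -
  have "\<exists>v. sat_classical_traj (- umax) (- umin) a b (- u0) (\<lambda>t. - p t) v"
    using um nonpos by (intro sat_classical_traj_exists_nonneg continuous_intros p) auto
  then show ?thesis using sat_classical_traj_uminus[OF um] by blast
qed

lemma sat_classical_traj_glue:
  assumes ac: "a \<le> c" and cb: "c \<le> b"
    and v1: "sat_classical_traj umin umax a c u0 p v1"
    and v2: "sat_classical_traj umin umax c b (v1 c) p v2"
  shows "sat_classical_traj umin umax a b u0 p (\<lambda>t. if t \<le> c then v1 t else v2 t)"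
  unfolding sat_classical_traj_def
proof (intro conjI ballI)
  show "(if a \<le> c then v1 a else v2 a) = u0" using ac v1 by (simp add: sat_classical_traj_def)
  have "continuous_on {t \<in> {a..b}. t \<le> c} v1" "continuous_on {t \<in> {a..b}. c \<le> t} v2"
    using v1 v2 by (auto simp: sat_classical_traj_def intro: continuous_on_subset)
  then show "continuous_on {a..b} (\<lambda>t. if t \<le> c then v1 t else v2 t)"
    by (rule continuous_on_cases_le[OF _ _ continuous_on_id])
       (use v2 in \<open>auto simp: sat_classical_traj_def\<close>)
  fix s assume s: "s \<in> {a..<b}"
  show "((\<lambda>t. if t \<le> c then v1 t else v2 t) has_real_derivative
          sat_S umin umax (if s \<le> c then v1 s else v2 s) (p s)) (at s within {s..b})"
  proof (cases "s < c")
    case True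
    with v1 s have "(v1 has_real_derivative sat_S umin umax (v1 s) (p s)) (at s within {s..c})"
      by (simp add: sat_classical_traj_def)
    moreover have "at s within {s..c} = at s within {s..b}"
      using True cb by (simp add: at_within_Icc_at_right)
    ultimately have "(v1 has_real_derivative sat_S umin umax (v1 s) (p s)) (at s within {s..b})"
      by simp
    moreover have "\<forall>\<^sub>F t in at s within {s..b}. v1 t = (if t \<le> c then v1 t else v2 t)"
      using order_tendstoD(2)[OF tendsto_ident_at True] by eventually_elim simp
    ultimately show ?thesis using True by (simp add: has_field_derivative_cong_eventually)
  next
    case False
    with v2 s have "(v2 has_real_derivative sat_S umin umax (v2 s) (p s)) (at s within {s..b})"
      by (simp add: sat_classical_traj_def)
    moreover have "v2 c = v1 c" using v2 by (simp add: sat_classical_traj_def)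
    moreover have "\<forall>\<^sub>F t in at s within {s..b}. v2 t = (if t \<le> c then v1 t else v2 t)"
      unfolding eventually_at_filter
      by (rule always_eventually) (use False \<open>v2 c = v1 c\<close> in auto)
    ultimately show ?thesis using False \<open>v2 c = v1 c\<close>
      by (auto simp: has_field_derivative_cong_eventually)
  qed
qed

lemma nonneg_or_nonpos_if_no_interior_zero:
  fixes p :: "real \<Rightarrow> real"
  assumes p: "continuous_on {a..b} p" and nz: "\<And>x. a < x \<Longrightarrow> x < b \<Longrightarrow> p x \<noteq> 0"
  shows "(\<forall>t\<in>{a..b}. 0 \<le> p t) \<or> (\<forall>t\<in>{a..b}. p t \<le> 0)"
proof (rule ccontr)
  assume "\<not> ?thesis"
  then obtain t1 t2 where t: "t1 \<in> {a..b}" "t2 \<in> {a..b}" "p t1 < 0" "0 < p t2"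
    by (auto simp: not_le)
  have "\<exists>x. min t1 t2 \<le> x \<and> x \<le> max t1 t2 \<and> p x = 0"
  proof (cases "t1 \<le> t2")
    case True
    have "continuous_on {t1..t2} p" by (rule continuous_on_subset[OF p]) (use t in auto)
    with True t show ?thesis using IVT'[of p t1 0 t2] by auto
  next
    case False
    have "continuous_on {t2..t1} p" by (rule continuous_on_subset[OF p]) (use t in auto)
    with False t show ?thesis using IVT2'[of p t1 0 t2] by auto
  qed
  then obtain x where "min t1 t2 \<le> x" "x \<le> max t1 t2" "p x = 0" by blast
  moreover have "x \<noteq> t1" "x \<noteq> t2" using t \<open>p x = 0\<close> by auto
  ultimately show False using nz[of x] t by (auto simp: min_def max_def split: if_splits)
qed

lemma sat_classical_traj_exists:
  assumes um: "umin < umax"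
  shows "a \<le> b \<Longrightarrow> continuous_on {a..b} p \<Longrightarrow> finite {x \<in> {a<..<b}. p x = 0} \<Longrightarrow>
    \<exists>v. sat_classical_traj umin umax a b u0 p v"
proof (induction "card {x \<in> {a<..<b}. p x = 0}" arbitrary: a b u0 rule: less_induct)
  case (less a b u0)
  show ?case
  proof (cases "\<exists>c \<in> {a<..<b}. p c = 0")
    case False
    then have "(\<forall>t\<in>{a..b}. 0 \<le> p t) \<or> (\<forall>t\<in>{a..b}. p t \<le> 0)"
      by (intro nonneg_or_nonpos_if_no_interior_zero less.prems) auto
    then show ?thesis
      using sat_classical_traj_exists_nonneg[OF um less.prems(2)]
        sat_classical_traj_exists_nonpos[OF um less.prems(2)] by blast
  next
    case True
    then obtain c where c: "a < c" "c < b" "p c = 0" by auto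
    have fewer: "card {x \<in> {a'<..<b'}. p x = 0} < card {x \<in> {a<..<b}. p x = 0}"
      if "{a'<..<b'} \<subseteq> {a<..<b}" "c \<notin> {a'<..<b'}" for a' b'
      by (rule psubset_card_mono[OF less.prems(3)]) (use that c in auto)
    have "continuous_on {a..c} p" "continuous_on {c..b} p"
      using c by (auto intro: continuous_on_subset[OF less.prems(2)])
    moreover have "finite {x \<in> {a<..<c}. p x = 0}" "finite {x \<in> {c<..<b}. p x = 0}"
      using c by (auto intro: finite_subset[OF _ less.prems(3)])
    ultimately obtain v1 v2 where v1: "sat_classical_traj umin umax a c u0 p v1"
      and v2: "sat_classical_traj umin umax c b (v1 c) p v2"
      using less.hyps[OF fewer[of a c]] less.hyps[OF fewer[of c b]] c by force
    show ?thesis using sat_classical_traj_glue[OF _ _ v1 v2] c by auto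
  qed
qed

lemma sat_poly_traj_exists:
  assumes "umin < umax" and "0 \<le> T"
  shows "\<exists>v. sat_poly_traj umin umax T u0 (poly q) v"
proof (cases "q = 0")
  case True
  then show ?thesis
    using sat_classical_traj_exists_nonneg[OF assms(1), of 0 T "poly q"]
    by (simp add: sat_poly_traj_iff_classical)
next
  case False
  then have "finite {x \<in> {0<..<T}. poly q x = 0}" using poly_roots_finite by fastforce
  moreover have "continuous_on {0..T} (poly q)" by (rule continuous_on_poly[OF continuous_on_id])
  ultimately show ?thesis
    using sat_classical_traj_exists[OF assms] by (simp add: sat_poly_traj_iff_classical)
qed

section \<open>Trajectories for continuous inputs\<close>

lemma real_polynomial_function_poly:
  assumes "real_polynomial_function f"
  obtains q where "f = poly q"
proof -
  obtain a n where "f = (\<lambda>x. \<Sum>i\<le>n. a i * x ^ i)"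
    using real_polynomial_function_imp_sum[OF assms] by blast
  then have "f = poly (\<Sum>i\<le>n. monom (a i) i)" by (simp add: poly_sum poly_monom fun_eq_iff)
  then show thesis by (rule that)
qed

lemma poly_uniform_approx:
  fixes w :: "real \<Rightarrow> real"
  assumes "continuous_on {a..b} w" and "e > 0"
  obtains q where "\<forall>x\<in>{a..b}. \<bar>poly q x - w x\<bar> < e"
proof -
  obtain g where g: "real_polynomial_function g" "\<And>x. x \<in> {a..b} \<Longrightarrow> \<bar>w x - g x\<bar> < e"
    using Stone_Weierstrass_real_polynomial_function[OF compact_Icc assms] by blast
  obtain q where "g = poly q" using real_polynomial_function_poly[OF g(1)] by blast
  with g(2) show thesis by (intro that[of q]) (auto simp: abs_minus_commute)
qed

lemma integral_abs_diff_triangle: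
  fixes p1 p2 w1 w2 :: "real \<Rightarrow> real"
  assumes "continuous_on {a..b} p1" "continuous_on {a..b} p2"
    and "continuous_on {a..b} w1" "continuous_on {a..b} w2"
  shows "integral {a..b} (\<lambda>s. \<bar>p1 s - p2 s\<bar>) \<le> integral {a..b} (\<lambda>s. \<bar>w1 s - w2 s\<bar>)
           + integral {a..b} (\<lambda>s. \<bar>p1 s - w1 s\<bar>) + integral {a..b} (\<lambda>s. \<bar>p2 s - w2 s\<bar>)"
proof -
  have "integral {a..b} (\<lambda>s. \<bar>p1 s - p2 s\<bar>)
      \<le> integral {a..b} (\<lambda>s. \<bar>w1 s - w2 s\<bar> + \<bar>p1 s - w1 s\<bar> + \<bar>p2 s - w2 s\<bar>)"
    by (rule integral_le) (auto intro!: integrable_continuous_real continuous_intros assms)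
  also have "\<dots> = integral {a..b} (\<lambda>s. \<bar>w1 s - w2 s\<bar>)
      + integral {a..b} (\<lambda>s. \<bar>p1 s - w1 s\<bar>) + integral {a..b} (\<lambda>s. \<bar>p2 s - w2 s\<bar>)"
    by (simp add: integral_add integrable_continuous_real continuous_intros assms)
  finally show ?thesis .
qed

lemma sat_poly_traj_close:
  assumes w: "continuous_on {0..T} w"
    and v1: "sat_poly_traj umin umax T u0 (poly q1) v1"
    and v2: "sat_poly_traj umin umax T u0 (poly q2) v2" and s: "s \<in> {0..T}"
  shows "\<bar>v1 s - v2 s\<bar> \<le> integral {0..T} (\<lambda>\<sigma>. \<bar>poly q1 \<sigma> - w \<sigma>\<bar>)
                         + integral {0..T} (\<lambda>\<sigma>. \<bar>poly q2 \<sigma> - w \<sigma>\<bar>)"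
proof -
  have q: "continuous_on {0..T} (poly q)" for q :: "real poly"
    by (rule continuous_on_poly[OF continuous_on_id])
  have "\<bar>v1 s - v2 s\<bar> \<le> integral {0..s} (\<lambda>\<sigma>. \<bar>poly q1 \<sigma> - poly q2 \<sigma>\<bar>)"
    using sat_classical_traj_L1_contraction[OF v1[unfolded sat_poly_traj_iff_classical]
        v2[unfolded sat_poly_traj_iff_classical] q q s] by simp
  also have "\<dots> \<le> integral {0..T} (\<lambda>\<sigma>. \<bar>poly q1 \<sigma> - poly q2 \<sigma>\<bar>)"
    by (rule integral_le_integral_subinterval[OF _ _ s]) (auto intro!: continuous_intros)
  also have "\<dots> \<le> integral {0..T} (\<lambda>\<sigma>. \<bar>w \<sigma> - w \<sigma>\<bar>) + integral {0..T} (\<lambda>\<sigma>. \<bar>poly q1 \<sigma> - w \<sigma>\<bar>)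
      + integral {0..T} (\<lambda>\<sigma>. \<bar>poly q2 \<sigma> - w \<sigma>\<bar>)"
    by (rule integral_abs_diff_triangle[OF q q w w])
  finally show ?thesis by simp
qed

lemma sat_poly_traj_L1_approx:
  assumes um: "umin < umax" and T: "0 \<le> T" and w: "continuous_on {0..T} w" and e: "e > 0"
  obtains q v where "sat_poly_traj umin umax T u0 (poly q) v"
    and "integral {0..T} (\<lambda>s. \<bar>poly q s - w s\<bar>) < e"
proof -
  obtain q where q: "\<forall>s\<in>{0..T}. \<bar>poly q s - w s\<bar> < e / (T + 1)"
    using poly_uniform_approx[OF w, of "e / (T + 1)"] e T by auto
  obtain v where v: "sat_poly_traj umin umax T u0 (poly q) v"
    using sat_poly_traj_exists[OF um T] by blast
  have "integral {0..T} (\<lambda>s. \<bar>poly q s - w s\<bar>) \<le> integral {0..T} (\<lambda>_. e / (T + 1))"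
    using q by (intro integral_le) (auto intro!: integrable_continuous_real continuous_intros w less_imp_le)
  also have "\<dots> < e" using e T by (simp add: field_simps)
  finally show thesis using v that by blast
qed

text \<open>Any two classical trajectories differ by at most the sum of the L1 errors of their
  inputs, so this infimum lies within its L1 error of every classical trajectory.\<close>
definition sat_traj :: "real \<Rightarrow> real \<Rightarrow> real \<Rightarrow> real \<Rightarrow> (real \<Rightarrow> real) \<Rightarrow> real \<Rightarrow> real" where
  "sat_traj umin umax T u0 w s =
     Inf {v s + integral {0..T} (\<lambda>\<sigma>. \<bar>poly q \<sigma> - w \<sigma>\<bar>) | q v.
            sat_poly_traj umin umax T u0 (poly q) v}"

lemma sat_traj_close:
  assumes w: "continuous_on {0..T} w"
    and v: "sat_poly_traj umin umax T u0 (poly q) v" and s: "s \<in> {0..T}"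
  shows "\<bar>v s - sat_traj umin umax T u0 w s\<bar> \<le> integral {0..T} (\<lambda>\<sigma>. \<bar>poly q \<sigma> - w \<sigma>\<bar>)"
proof -
  define A where "A = {v s + integral {0..T} (\<lambda>\<sigma>. \<bar>poly q \<sigma> - w \<sigma>\<bar>) | q v.
                         sat_poly_traj umin umax T u0 (poly q) v}"
  have lower: "v s - integral {0..T} (\<lambda>\<sigma>. \<bar>poly q \<sigma> - w \<sigma>\<bar>) \<le> a" if "a \<in> A" for a
  proof -
    from that obtain q' v' where a: "a = v' s + integral {0..T} (\<lambda>\<sigma>. \<bar>poly q' \<sigma> - w \<sigma>\<bar>)"
      and v': "sat_poly_traj umin umax T u0 (poly q') v'"
      by (auto simp: A_def)
    with sat_poly_traj_close[OF w v v' s] show ?thesis by linarith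
  qed
  have mem: "v s + integral {0..T} (\<lambda>\<sigma>. \<bar>poly q \<sigma> - w \<sigma>\<bar>) \<in> A" using v by (auto simp: A_def)
  moreover have "bdd_below A" using lower unfolding bdd_below_def by blast
  ultimately have "Inf A \<le> v s + integral {0..T} (\<lambda>\<sigma>. \<bar>poly q \<sigma> - w \<sigma>\<bar>)"
    by (rule cInf_lower)
  moreover have "v s - integral {0..T} (\<lambda>\<sigma>. \<bar>poly q \<sigma> - w \<sigma>\<bar>) \<le> Inf A"
    using mem lower by (intro cInf_greatest) auto
  ultimately show ?thesis unfolding sat_traj_def A_def[symmetric] by linarith
qed

lemma sat_traj_on_approxE:
  assumes um: "umin < umax" and T: "0 \<le> T" and w: "continuous_on {0..T} w"
    and u: "sat_traj_on umin umax T u0 w u" and e: "e > 0"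
  obtains q v where "sat_poly_traj umin umax T u0 (poly q) v"
    and "integral {0..T} (\<lambda>s. \<bar>poly q s - w s\<bar>) < e" and "\<forall>s\<in>{0..T}. \<bar>v s - u s\<bar> < e"
proof -
  obtain \<eta> where "\<eta> > 0" and \<eta>: "\<And>q v. sat_poly_traj umin umax T u0 (poly q) v \<Longrightarrow>
      integral {0..T} (\<lambda>s. \<bar>poly q s - w s\<bar>) < \<eta> \<Longrightarrow> \<forall>s\<in>{0..T}. \<bar>v s - u s\<bar> < e"
    using u e unfolding sat_traj_on_def by blast
  obtain q v where v: "sat_poly_traj umin umax T u0 (poly q) v"
    and q: "integral {0..T} (\<lambda>s. \<bar>poly q s - w s\<bar>) < min e \<eta>"
    using sat_poly_traj_L1_approx[OF um T w, of "min e \<eta>"] e \<open>\<eta> > 0\<close> by auto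
  with \<eta>[OF v] show thesis by (intro that[OF v]) auto
qed

lemma sat_traj_onI_approx:
  assumes w: "continuous_on {0..T} w"
    and approx: "\<And>e. e > 0 \<Longrightarrow> \<exists>q v. sat_poly_traj umin umax T u0 (poly q) v \<and>
       integral {0..T} (\<lambda>s. \<bar>poly q s - w s\<bar>) < e \<and> (\<forall>s\<in>{0..T}. \<bar>v s - u s\<bar> < e)"
  shows "sat_traj_on umin umax T u0 w u"
  unfolding sat_traj_on_def
proof (intro conjI allI impI)
  show "w absolutely_integrable_on {0..T}" by (rule absolutely_integrable_continuous_real[OF w])
  fix e :: real assume "e > 0"
  then obtain q v where v: "sat_poly_traj umin umax T u0 (poly q) v"
    and q: "integral {0..T} (\<lambda>s. \<bar>poly q s - w s\<bar>) < e / 4"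
    and vu: "\<forall>s\<in>{0..T}. \<bar>v s - u s\<bar> < e / 4"
    using approx[of "e / 4"] by auto
  show "\<exists>\<eta>>0. \<forall>q' v'. sat_poly_traj umin umax T u0 (poly q') v' \<and>
      integral {0..T} (\<lambda>s. \<bar>poly q' s - w s\<bar>) < \<eta> \<longrightarrow> (\<forall>s\<in>{0..T}. \<bar>v' s - u s\<bar> < e)"
  proof (intro exI[of _ "e / 2"] conjI allI impI ballI)
    fix q' v' s
    assume q'v': "sat_poly_traj umin umax T u0 (poly q') v' \<and>
      integral {0..T} (\<lambda>s. \<bar>poly q' s - w s\<bar>) < e / 2" and s: "s \<in> {0..T}"
    have "\<bar>v' s - v s\<bar> \<le> integral {0..T} (\<lambda>s. \<bar>poly q' s - w s\<bar>)
        + integral {0..T} (\<lambda>s. \<bar>poly q s - w s\<bar>)"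
      using sat_poly_traj_close[OF w conjunct1[OF q'v'] v s] .
    moreover have "\<bar>v s - u s\<bar> < e / 4" using vu s by blast
    ultimately show "\<bar>v' s - u s\<bar> < e" using q q'v' by linarith
  qed (use \<open>e > 0\<close> in simp)
qed

lemma sat_traj_on_sat_traj:
  assumes um: "umin < umax" and T: "0 \<le> T" and w: "continuous_on {0..T} w"
  shows "sat_traj_on umin umax T u0 w (sat_traj umin umax T u0 w)"
proof (rule sat_traj_onI_approx[OF w])
  fix e :: real assume "e > 0"
  then obtain q v where v: "sat_poly_traj umin umax T u0 (poly q) v"
    and q: "integral {0..T} (\<lambda>s. \<bar>poly q s - w s\<bar>) < e"
    by (rule sat_poly_traj_L1_approx[OF um T w])
  show "\<exists>q v. sat_poly_traj umin umax T u0 (poly q) v \<and>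
      integral {0..T} (\<lambda>s. \<bar>poly q s - w s\<bar>) < e \<and>
      (\<forall>s\<in>{0..T}. \<bar>v s - sat_traj umin umax T u0 w s\<bar> < e)"
  proof (intro exI[of _ q] exI[of _ v] conjI ballI v q)
    fix s assume "s \<in> {0..T}"
    with sat_traj_close[OF w v] q show "\<bar>v s - sat_traj umin umax T u0 w s\<bar> < e"
      by fastforce
  qed
qed

lemma sat_traj_on_restrict:
  assumes um: "umin < umax" and T: "0 \<le> T" and w: "continuous_on {0..T} w"
    and u: "sat_traj_on umin umax T u0 w u" and t: "t \<in> {0..T}"
  shows "sat_traj_on umin umax t u0 w u"
proof (rule sat_traj_onI_approx)
  show "continuous_on {0..t} w" using w t by (auto intro: continuous_on_subset)
  fix e :: real assume "e > 0"
  then obtain q v where v: "sat_poly_traj umin umax T u0 (poly q) v"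
    and q: "integral {0..T} (\<lambda>s. \<bar>poly q s - w s\<bar>) < e" and vu: "\<forall>s\<in>{0..T}. \<bar>v s - u s\<bar> < e"
    by (rule sat_traj_on_approxE[OF um T w u])
  have "integral {0..t} (\<lambda>s. \<bar>poly q s - w s\<bar>) \<le> integral {0..T} (\<lambda>s. \<bar>poly q s - w s\<bar>)"
    by (rule integral_le_integral_subinterval[OF _ _ t]) (auto intro!: continuous_intros w)
  moreover have "sat_poly_traj umin umax t u0 (poly q) v"
    using v t by (auto simp: sat_poly_traj_iff_classical intro: sat_classical_traj_restrict)
  ultimately show "\<exists>q v. sat_poly_traj umin umax t u0 (poly q) v \<and>
      integral {0..t} (\<lambda>s. \<bar>poly q s - w s\<bar>) < e \<and> (\<forall>s\<in>{0..t}. \<bar>v s - u s\<bar> < e)"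
    using q vu t by (intro exI[of _ q] exI[of _ v]) auto
qed

lemma sat_traj_on_continuous:
  assumes um: "umin < umax" and T: "0 \<le> T" and w: "continuous_on {0..T} w"
    and u: "sat_traj_on umin umax T u0 w u"
  shows "continuous_on {0..T} u"
  unfolding continuous_on_iff
proof (intro ballI allI impI)
  fix s e :: real assume s: "s \<in> {0..T}" and "e > 0"
  then have e3: "e / 3 > 0" by simp
  then obtain q v where v: "sat_poly_traj umin umax T u0 (poly q) v"
    and vu: "\<forall>s\<in>{0..T}. \<bar>v s - u s\<bar> < e / 3"
    by (rule sat_traj_on_approxE[OF um T w u])
  then have "continuous_on {0..T} v" by (simp add: sat_poly_traj_def)
  then obtain d where "d > 0" and d: "\<forall>s'\<in>{0..T}. dist s' s < d \<longrightarrow> dist (v s') (v s) < e / 3"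
    using s e3 unfolding continuous_on_iff by blast
  show "\<exists>d>0. \<forall>s'\<in>{0..T}. dist s' s < d \<longrightarrow> dist (u s') (u s) < e"
  proof (intro exI[of _ d] conjI ballI impI \<open>d > 0\<close>)
    fix s' assume s': "s' \<in> {0..T}" "dist s' s < d"
    with d have "\<bar>v s' - v s\<bar> < e / 3" by (simp add: dist_real_def)
    moreover have "\<bar>v s' - u s'\<bar> < e / 3" "\<bar>v s - u s\<bar> < e / 3" using vu s s' by auto
    ultimately show "dist (u s') (u s) < e" unfolding dist_real_def by linarith
  qed
qed

lemma sat_traj_on_L1_contraction:
  assumes um: "umin < umax" and T: "0 \<le> T"
    and w1: "continuous_on {0..T} w1" and w2: "continuous_on {0..T} w2"
    and u1: "sat_traj_on umin umax T u0 w1 u1" and u2: "sat_traj_on umin umax T u0 w2 u2"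
    and s: "s \<in> {0..T}"
  shows "\<bar>u1 s - u2 s\<bar> \<le> integral {0..s} (\<lambda>\<sigma>. \<bar>w1 \<sigma> - w2 \<sigma>\<bar>)"
proof (rule field_le_epsilon)
  fix e :: real assume "e > 0"
  have s0: "0 \<le> s" and w1s: "continuous_on {0..s} w1" and w2s: "continuous_on {0..s} w2"
    using s w1 w2 by (auto intro: continuous_on_subset)
  have "e / 4 > 0" using \<open>e > 0\<close> by simp
  obtain q1 v1 where v1: "sat_poly_traj umin umax s u0 (poly q1) v1"
    and q1: "integral {0..s} (\<lambda>\<sigma>. \<bar>poly q1 \<sigma> - w1 \<sigma>\<bar>) < e / 4"
    and v1u1: "\<forall>\<sigma>\<in>{0..s}. \<bar>v1 \<sigma> - u1 \<sigma>\<bar> < e / 4"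
    by (rule sat_traj_on_approxE[OF um s0 w1s sat_traj_on_restrict[OF um T w1 u1 s] \<open>e / 4 > 0\<close>])
  obtain q2 v2 where v2: "sat_poly_traj umin umax s u0 (poly q2) v2"
    and q2: "integral {0..s} (\<lambda>\<sigma>. \<bar>poly q2 \<sigma> - w2 \<sigma>\<bar>) < e / 4"
    and v2u2: "\<forall>\<sigma>\<in>{0..s}. \<bar>v2 \<sigma> - u2 \<sigma>\<bar> < e / 4"
    by (rule sat_traj_on_approxE[OF um s0 w2s sat_traj_on_restrict[OF um T w2 u2 s] \<open>e / 4 > 0\<close>])
  have q: "continuous_on {0..s} (poly q)" for q :: "real poly"
    by (rule continuous_on_poly[OF continuous_on_id])
  have "\<bar>v1 s - v2 s\<bar> \<le> integral {0..s} (\<lambda>\<sigma>. \<bar>poly q1 \<sigma> - poly q2 \<sigma>\<bar>)"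
    using sat_classical_traj_L1_contraction[OF v1[unfolded sat_poly_traj_iff_classical]
        v2[unfolded sat_poly_traj_iff_classical] q q, of s] s0 by simp
  also have "\<dots> \<le> integral {0..s} (\<lambda>\<sigma>. \<bar>w1 \<sigma> - w2 \<sigma>\<bar>) + integral {0..s} (\<lambda>\<sigma>. \<bar>poly q1 \<sigma> - w1 \<sigma>\<bar>)
      + integral {0..s} (\<lambda>\<sigma>. \<bar>poly q2 \<sigma> - w2 \<sigma>\<bar>)"
    by (rule integral_abs_diff_triangle[OF q q w1s w2s])
  finally have "\<bar>v1 s - v2 s\<bar> \<le> integral {0..s} (\<lambda>\<sigma>. \<bar>w1 \<sigma> - w2 \<sigma>\<bar>)
      + integral {0..s} (\<lambda>\<sigma>. \<bar>poly q1 \<sigma> - w1 \<sigma>\<bar>) + integral {0..s} (\<lambda>\<sigma>. \<bar>poly q2 \<sigma> - w2 \<sigma>\<bar>)" .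
  moreover have "\<bar>v1 s - u1 s\<bar> < e / 4" "\<bar>v2 s - u2 s\<bar> < e / 4" using v1u1 v2u2 s0 by auto
  ultimately show "\<bar>u1 s - u2 s\<bar> \<le> integral {0..s} (\<lambda>\<sigma>. \<bar>w1 \<sigma> - w2 \<sigma>\<bar>) + e"
    using q1 q2 by linarith
qed

lemma sat_traj_on_unique:
  assumes um: "umin < umax" and T: "0 \<le> T" and w: "continuous_on {0..T} w"
    and "sat_traj_on umin umax T u0 w u1" and "sat_traj_on umin umax T u0 w u2" and s: "s \<in> {0..T}"
  shows "u1 s = u2 s"
  using sat_traj_on_L1_contraction[OF um T w w assms(4,5) s] by simp

lemma sat_traj_on_zero_input:
  assumes um: "umin < umax" and T: "0 \<le> T"
  shows "sat_traj_on umin umax T u0 (\<lambda>_. 0) (\<lambda>_. u0)"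
proof (rule sat_traj_onI_approx[OF continuous_on_const])
  have "sat_poly_traj umin umax T u0 (poly 0) (\<lambda>_. u0)" by (simp add: sat_poly_traj_def)
  then show "\<exists>q v. sat_poly_traj umin umax T u0 (poly q) v \<and>
      integral {0..T} (\<lambda>s. \<bar>poly q s - 0\<bar>) < e \<and> (\<forall>s\<in>{0..T}. \<bar>v s - u0\<bar> < e)" if "e > 0" for e
    using that by (intro exI[of _ 0] exI[of _ "\<lambda>_. u0"]) auto
qed

lemma sat_traj_on_deviation:
  assumes um: "umin < umax" and T: "0 \<le> T" and w: "continuous_on {0..T} w"
    and u: "sat_traj_on umin umax T u0 w u" and s: "s \<in> {0..T}"
  shows "\<bar>u s - u0\<bar> \<le> integral {0..s} (\<lambda>\<sigma>. \<bar>w \<sigma>\<bar>)"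
  using sat_traj_on_L1_contraction[OF um T w _ u sat_traj_on_zero_input[OF um T] s] by simp

lemma sat_traj_on_initial:
  assumes "umin < umax" and "0 \<le> T" and "continuous_on {0..T} w" and "sat_traj_on umin umax T u0 w u"
  shows "u 0 = u0"
  using sat_traj_on_deviation[OF assms, of 0] assms(2) by simp

lemma sat_traj_on_cong:
  assumes "sat_traj_on umin umax T u0 w u"
    and "continuous_on {0..T} w'" and "\<And>s. s \<in> {0..T} \<Longrightarrow> w' s = w s"
  shows "sat_traj_on umin umax T u0 w' u"
proof -
  have "integral {0..T} (\<lambda>s. \<bar>poly q s - w' s\<bar>) = integral {0..T} (\<lambda>s. \<bar>poly q s - w s\<bar>)" for q
    by (rule integral_cong) (use assms(3) in auto)
  with assms(1) absolutely_integrable_continuous_real[OF assms(2)] show ?thesis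
    unfolding sat_traj_on_def by simp
qed

section \<open>Integral equations with memory\<close>

lemma clamp_real: "a \<le> b \<Longrightarrow> clamp a b (x::real) = max a (min b x)"
  unfolding clamp_def Basis_real_def by auto

lemma bcontfun_clamp:
  fixes f :: "real \<Rightarrow> 'a::metric_space"
  assumes "continuous_on {a..b} f"
  shows "(\<lambda>t. f (clamp a b t)) \<in> bcontfun"
proof -
  obtain g :: "real \<Rightarrow>\<^sub>C 'a" where "\<And>t. apply_bcontfun g t = f (clamp a b t)"
    using continuous_on_cbox_bcontfunE[of a b f] assms by auto
  then have "(\<lambda>t. f (clamp a b t)) = apply_bcontfun g" by auto
  then show ?thesis by (simp add: apply_bcontfun)
qed

definition history_integral :: "real \<Rightarrow> (real \<Rightarrow> 'a::banach) \<Rightarrow> (real \<Rightarrow> 'a) \<Rightarrow> real \<Rightarrow> 'a" where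
  "history_integral a y0 g t = (if t \<le> a then y0 t else y0 a + integral {a..t} g)"

definition follows_history :: "real \<Rightarrow> real \<Rightarrow> (real \<Rightarrow> 'a::metric_space) \<Rightarrow> (real \<Rightarrow> 'a) \<Rightarrow> bool" where
  "follows_history a h y0 y \<longleftrightarrow> continuous_on UNIV y \<and> (\<forall>\<sigma>\<in>{0..a}. y \<sigma> = y0 \<sigma>) \<and>
     (\<forall>\<sigma>\<in>{a..a + h}. dist (y \<sigma>) (y0 a) \<le> 1)"

lemma continuous_on_history_integral:
  assumes "continuous_on {0..a} y0" and "continuous_on {a..b} g"
  shows "continuous_on {0..b} (history_integral a y0 g)"
proof -
  have "continuous_on {t \<in> {0..b}. t \<le> a} y0"
    using assms(1) by (rule continuous_on_subset) auto
  moreover have "continuous_on {t \<in> {0..b}. a \<le> t} (\<lambda>t. y0 a + integral {a..t} g)"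
    by (rule continuous_on_subset[of "{a..b}"])
       (auto intro!: continuous_intros indefinite_integral_continuous_1 integrable_continuous_real assms(2))
  ultimately show ?thesis
    unfolding history_integral_def by (rule continuous_on_cases_le[OF _ _ continuous_on_id]) auto
qed

lemma closed_follows_history:
  fixes y0 :: "real \<Rightarrow> 'a::complete_space"
  shows "closed {y :: real \<Rightarrow>\<^sub>C 'a. follows_history a h y0 (apply_bcontfun y)}"
proof -
  have "{y :: real \<Rightarrow>\<^sub>C 'a. follows_history a h y0 (apply_bcontfun y)} =
      PiC {0..a} (\<lambda>\<sigma>. {y0 \<sigma>}) \<inter> PiC {a..a + h} (\<lambda>_. cball (y0 a) 1)"
    by (auto simp: follows_history_def mem_PiC_iff Pi_iff dist_commute)
  then show ?thesis by (simp add: closed_Int closed_PiC)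
qed

lemma follows_history_cball:
  fixes y0 :: "real \<Rightarrow> 'a::real_normed_vector"
  assumes y: "follows_history a h y0 y" and B: "\<forall>\<sigma>\<in>{0..a}. y0 \<sigma> \<in> cball 0 B" and a: "0 \<le> a"
  shows "\<forall>\<sigma>\<in>{0..a + h}. y \<sigma> \<in> cball 0 (B + 1)"
proof
  fix \<sigma> assume \<sigma>: "\<sigma> \<in> {0..a + h}"
  show "y \<sigma> \<in> cball 0 (B + 1)"
  proof (cases "\<sigma> \<le> a")
    case True
    with y \<sigma> B have "y \<sigma> = y0 \<sigma>" "norm (y0 \<sigma>) \<le> B" by (auto simp: follows_history_def)
    then show ?thesis by simp
  next
    case False
    with y \<sigma> have "dist (y \<sigma>) (y0 a) \<le> 1" by (auto simp: follows_history_def)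
    moreover have "norm (y0 a) \<le> B" using B a by auto
    ultimately show ?thesis using norm_triangle_ineq2[of "y \<sigma>" "y0 a"] by (auto simp: dist_norm)
  qed
qed

lemma follows_history_history_integral:
  assumes a: "0 \<le> a" and h: "0 \<le> h" and y0: "continuous_on {0..a} y0"
    and g: "continuous_on {a..a + h} g" and M: "\<forall>s\<in>{a..a + h}. norm (g s) \<le> M" and hM: "h * M \<le> 1"
  shows "follows_history a h y0 (\<lambda>t. history_integral a y0 g (clamp 0 (a + h) t))"
  unfolding follows_history_def
proof (intro conjI ballI)
  have "(\<lambda>t. history_integral a y0 g (clamp 0 (a + h) t)) \<in> bcontfun"
    by (rule bcontfun_clamp[OF continuous_on_history_integral[OF y0 g]])
  then show "continuous_on UNIV (\<lambda>t. history_integral a y0 g (clamp 0 (a + h) t))"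
    by (simp add: bcontfun_def)
  fix \<sigma>
  show "\<sigma> \<in> {0..a} \<Longrightarrow> history_integral a y0 g (clamp 0 (a + h) \<sigma>) = y0 \<sigma>"
    using h by (simp add: clamp_real history_integral_def)
  assume \<sigma>: "\<sigma> \<in> {a..a + h}"
  have "norm (integral {a..\<sigma>} g) \<le> M * (\<sigma> - a)"
    using \<sigma> M by (intro integral_bound continuous_on_subset[OF g]) auto
  also have "\<dots> \<le> M * h" using \<sigma> M a by (intro mult_left_mono) (auto intro: order_trans[OF norm_ge_zero])
  also have "\<dots> \<le> 1" using hM by (simp add: mult.commute)
  finally have "norm (integral {a..\<sigma>} g) \<le> 1" .
  then show "dist (history_integral a y0 g (clamp 0 (a + h) \<sigma>)) (y0 a) \<le> 1"
    using \<sigma> a by (cases "\<sigma> = a") (auto simp: clamp_real history_integral_def dist_norm)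
qed

lemma history_integral_dist:
  assumes a: "0 \<le> a" and h: "0 \<le> h"
    and g: "continuous_on {a..a + h} g1" "continuous_on {a..a + h} g2"
    and L: "\<forall>s\<in>{a..a + h}. norm (g1 s - g2 s) \<le> L"
  shows "norm (history_integral a y0 g1 (clamp 0 (a + h) t) - history_integral a y0 g2 (clamp 0 (a + h) t))
    \<le> L * h"
proof -
  define c where "c = clamp 0 (a + h) t"
  have c: "c \<le> a + h" using a h by (simp add: c_def clamp_real)
  have "norm (g1 a - g2 a) \<le> L" using L h by simp
  then have "0 \<le> L" using norm_ge_zero order_trans by blast
  show ?thesis
  proof (cases "c \<le> a")
    case False
    have "continuous_on {a..c} g1" "continuous_on {a..c} g2" using c by (auto intro: continuous_on_subset g)
    moreover have "norm (integral {a..c} (\<lambda>s. g1 s - g2 s)) \<le> L * (c - a)"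
      using False c L by (intro integral_bound continuous_intros continuous_on_subset[OF g(1)]
          continuous_on_subset[OF g(2)]) auto
    moreover have "L * (c - a) \<le> L * h" using c \<open>0 \<le> L\<close> by (intro mult_left_mono) auto
    ultimately show ?thesis using False
      by (simp add: c_def[symmetric] history_integral_def integral_diff integrable_continuous_real)
  qed (use \<open>0 \<le> L\<close> h in \<open>simp add: c_def[symmetric] history_integral_def\<close>)
qed

text \<open>Banach's fixed point theorem for the Picard map on bounded continuous functions that follow
  the history: \<open>h * M \<le> 1\<close> keeps its values in the unit ball around \<open>y0 a\<close> and
  \<open>h * C \<le> 1 / 2\<close> makes it a contraction.\<close>
lemma integral_equation_local_solution:
  fixes G :: "(real \<Rightarrow> 'a::banach) \<Rightarrow> real \<Rightarrow> 'a"
  assumes a: "0 \<le> a" and h: "0 < h" and y0: "continuous_on {0..a} y0"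
    and G_cont: "\<And>y. follows_history a h y0 y \<Longrightarrow> continuous_on {a..a + h} (G y)"
    and G_bound: "\<And>y s. follows_history a h y0 y \<Longrightarrow> s \<in> {a..a + h} \<Longrightarrow> norm (G y s) \<le> M"
    and G_lipschitz: "\<And>y1 y2 s D. follows_history a h y0 y1 \<Longrightarrow> follows_history a h y0 y2 \<Longrightarrow>
        s \<in> {a..a + h} \<Longrightarrow> \<forall>\<sigma>. norm (y1 \<sigma> - y2 \<sigma>) \<le> D \<Longrightarrow> norm (G y1 s - G y2 s) \<le> C * D"
    and hM: "h * M \<le> 1" and hC: "h * C \<le> 1 / 2"
  obtains y where "follows_history a h y0 y"
    and "\<forall>t\<in>{a..a + h}. y t = y0 a + integral {a..t} (G y)"
proof -
  define F where "F y t = history_integral a y0 (G y) (clamp 0 (a + h) t)" for y t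
  define S where "S = {y :: real \<Rightarrow>\<^sub>C 'a. follows_history a h y0 (apply_bcontfun y)}"
  define P where "P y = Bcontfun (F (apply_bcontfun y))" for y
  have F: "follows_history a h y0 (F (apply_bcontfun y))" if "y \<in> S" for y
    using that a h unfolding F_def S_def
    by (intro follows_history_history_integral[of a h y0 _ M] y0 G_cont G_bound ballI hM) auto
  have P: "apply_bcontfun (P y) = F (apply_bcontfun y)" if "y \<in> S" for y
  proof -
    have "F (apply_bcontfun y) \<in> bcontfun"
      using that unfolding F_def S_def
      by (intro bcontfun_clamp continuous_on_history_integral y0 G_cont) auto
    then show ?thesis by (simp add: P_def Bcontfun_inverse)
  qed
  have "P ` S \<subseteq> S" using F P by (auto simp: S_def)
  moreover have "dist (P y1) (P y2) \<le> 1 / 2 * dist y1 y2" if y: "y1 \<in> S" "y2 \<in> S" for y1 y2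
  proof (rule dist_bound)
    fix t
    have "\<forall>\<sigma>. norm (apply_bcontfun y1 \<sigma> - apply_bcontfun y2 \<sigma>) \<le> dist y1 y2"
      using dist_bounded[of y1 _ y2] by (simp add: dist_norm[of "apply_bcontfun y1 _"])
    with y have "norm (F (apply_bcontfun y1) t - F (apply_bcontfun y2) t) \<le> C * dist y1 y2 * h"
      unfolding F_def S_def using a h
      by (intro history_integral_dist G_cont G_lipschitz ballI) auto
    also have "\<dots> = (h * C) * dist y1 y2" by simp
    also have "\<dots> \<le> 1 / 2 * dist y1 y2" using hC by (intro mult_right_mono) auto
    finally show "dist (apply_bcontfun (P y1) t) (apply_bcontfun (P y2) t) \<le> 1 / 2 * dist y1 y2"
      by (simp add: P y dist_norm)
  qed
  moreover have "complete S"
    unfolding S_def by (intro complete_eq_closed[THEN iffD2] closed_follows_history)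
  moreover have "Bcontfun (\<lambda>t. y0 (clamp 0 a t)) \<in> S"
    using bcontfun_clamp[OF y0] a
    by (auto simp: S_def follows_history_def bcontfun_def Bcontfun_inverse clamp_real)
  then have "S \<noteq> {}" by blast
  ultimately obtain y where "y \<in> S" and "P y = y"
    using Banach_fix[of S "1 / 2" P] by auto
  show thesis
  proof (rule that)
    show "follows_history a h y0 (apply_bcontfun y)" using \<open>y \<in> S\<close> by (simp add: S_def)
    show "\<forall>t\<in>{a..a + h}. apply_bcontfun y t = y0 a + integral {a..t} (G (apply_bcontfun y))"
    proof
      fix t assume t: "t \<in> {a..a + h}"
      have "apply_bcontfun y t = F (apply_bcontfun y) t" by (metis P \<open>y \<in> S\<close> \<open>P y = y\<close>)
      also have "\<dots> = y0 a + integral {a..t} (G (apply_bcontfun y))"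
        using t a h by (cases "t = a") (auto simp: F_def clamp_real history_integral_def)
      finally show "apply_bcontfun y t = y0 a + integral {a..t} (G (apply_bcontfun y))" .
    qed
  qed
qed

lemma eq_if_causal_lipschitz:
  fixes y1 y2 :: "real \<Rightarrow> 'a::real_normed_vector"
  assumes c1: "continuous_on {0..b} y1" and c2: "continuous_on {0..b} y2"
    and init: "y1 0 = y2 0" and C: "0 \<le> C"
    and step: "\<And>a t D. 0 \<le> a \<Longrightarrow> a \<le> t \<Longrightarrow> t \<le> b \<Longrightarrow> \<forall>\<sigma>\<in>{0..a}. y1 \<sigma> = y2 \<sigma> \<Longrightarrow>
        \<forall>\<sigma>\<in>{0..t}. norm (y1 \<sigma> - y2 \<sigma>) \<le> D \<Longrightarrow> norm (y1 t - y2 t) \<le> C * D * (t - a)"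
    and t: "t \<in> {0..b}"
  shows "y1 t = y2 t"
proof -
  define h where "h = 1 / (2 * (C + 1))"
  have h: "0 < h" "h * C \<le> 1 / 2" using C by (auto simp: h_def field_simps)
  define \<delta> where "\<delta> t = norm (y1 t - y2 t)" for t
  have \<delta>: "continuous_on {0..b} \<delta>" unfolding \<delta>_def by (intro continuous_intros c1 c2)
  have eq_upto: "\<forall>t\<in>{0..min b (real n * h)}. y1 t = y2 t" for n
  proof (induction n)
    case 0
    then show ?case using init by auto
  next
    case (Suc n)
    define a where "a = min b (real n * h)"
    define a' where "a' = min b (real (Suc n) * h)"
    have aa: "0 \<le> a" "a \<le> a'" "a' \<le> b" "a' - a \<le> h" if "0 \<le> b"
      using h that by (auto simp: a_def a'_def min_def algebra_simps)
    show ?case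
    proof (cases "0 \<le> b")
      case True
      obtain tm where tm: "tm \<in> {0..a'}" and max: "\<forall>t\<in>{0..a'}. \<delta> t \<le> \<delta> tm"
        using continuous_attains_sup[of "{0..a'}" \<delta>] continuous_on_subset[OF \<delta>, of "{0..a'}"] aa True
        by auto
      have "\<delta> t \<le> C * \<delta> tm * h" if "t \<in> {0..a'}" for t
      proof (cases "t \<le> a")
        case True
        with Suc.IH that have "\<delta> t = 0" by (simp add: a_def \<delta>_def)
        with C h show ?thesis by (simp add: \<delta>_def)
      next
        case False
        with aa \<open>0 \<le> b\<close> that Suc.IH max have "\<delta> t \<le> C * \<delta> tm * (t - a)"
          unfolding \<delta>_def by (intro step) (auto simp: a_def)
        also have "\<dots> \<le> C * \<delta> tm * h"
          using aa \<open>0 \<le> b\<close> that C by (intro mult_left_mono) (auto simp: \<delta>_def)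
        finally show ?thesis .
      qed
      then have "\<delta> tm \<le> (h * C) * \<delta> tm" using tm by (simp add: ac_simps)
      also have "\<dots> \<le> 1 / 2 * \<delta> tm" using h by (intro mult_right_mono) (auto simp: \<delta>_def)
      finally have "\<forall>t\<in>{0..a'}. \<delta> t \<le> 0" using max by (auto simp: \<delta>_def)
      then show ?thesis by (auto simp: a'_def \<delta>_def)
    qed (auto simp: a'_def)
  qed
  obtain n where "b < real n * h" using reals_Archimedean3[OF h(1)] by blast
  with eq_upto[of n] t show ?thesis by auto
qed

section \<open>The closed loop\<close>

lemma continuous_if_lipschitz_on_compacts:
  fixes f :: "'a::heine_borel \<Rightarrow> 'b::metric_space"
  assumes "\<And>K. compact K \<Longrightarrow> \<exists>L. L-lipschitz_on K f"
  shows "continuous_on UNIV f"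
proof (rule continuous_at_imp_continuous_on, intro ballI)
  fix z
  obtain L where "L-lipschitz_on (cball z 1) f" using assms compact_cball by blast
  then have "continuous_on (ball z 1) f"
    by (meson ball_subset_cball lipschitz_on_continuous_on lipschitz_on_subset)
  then show "isCont f z" by (simp add: continuous_on_eq_continuous_at)
qed

lemma lipschitz_on_compact_if_continuous_derivative:
  fixes f :: "'a::euclidean_space \<Rightarrow> 'b::real_normed_vector"
  assumes deriv: "\<And>z. (f has_derivative blinfun_apply (f' z)) (at z)"
    and cont: "continuous_on UNIV f'" and K: "compact K"
  shows "\<exists>L. L-lipschitz_on K f"
proof -
  obtain R where K_R: "K \<subseteq> cball 0 R"
    using compact_imp_bounded[OF K] bounded_pos by (metis mem_cball_0 subsetI)
  have "bounded (f' ` cball 0 R)"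
    by (rule compact_imp_bounded[OF compact_continuous_image[OF continuous_on_subset[OF cont]]]) auto
  then obtain B where "B > 0" and B: "\<forall>z\<in>cball 0 R. norm (f' z) \<le> B"
    unfolding bounded_pos by blast
  have "B-lipschitz_on (cball 0 R) f"
  proof (rule lipschitz_onI)
    fix x y assume "x \<in> cball (0::'a) R" "y \<in> cball (0::'a) R"
    with B show "dist (f x) (f y) \<le> B * dist x y"
      unfolding dist_norm
      by (intro differentiable_bound[OF convex_cball[of 0 R] has_derivative_at_withinI[OF deriv]])
         (auto simp: norm_blinfun.rep_eq[symmetric])
  qed (use \<open>B > 0\<close> in simp)
  with K_R show ?thesis by (meson lipschitz_on_subset)
qed

lemma bounded_if_Limsup_at_left_finite:
  fixes x :: "real \<Rightarrow> 'a::real_normed_vector"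
  assumes ls: "Limsup (at_left T) (\<lambda>t. ereal (norm (x t))) \<noteq> \<infinity>"
    and cont: "\<And>t. 0 \<le> t \<Longrightarrow> t < T \<Longrightarrow> continuous_on {0..t} x"
  obtains B where "\<forall>t\<in>{0..<T}. norm (x t) \<le> B"
proof (cases "0 < T")
  case True
  obtain n :: nat where "Limsup (at_left T) (\<lambda>t. ereal (norm (x t))) < ereal (real n)"
    using ls less_PInf_Ex_of_nat by blast
  then have "\<forall>\<^sub>F t in at_left T. ereal (norm (x t)) < ereal (real n)" by (rule Limsup_lessD)
  then obtain t1 where t1: "t1 < T" and near: "\<And>t. t1 < t \<Longrightarrow> t < T \<Longrightarrow> norm (x t) < real n"
    unfolding eventually_at_left_field by auto
  have "bounded (x ` {0..max 0 t1})"
    using True t1 by (intro compact_imp_bounded compact_continuous_image cont) auto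
  then obtain B where B: "\<forall>t\<in>{0..max 0 t1}. norm (x t) \<le> B" by (auto simp: bounded_iff)
  show thesis
  proof (rule that[of "max B (real n)"], intro ballI)
    fix t assume "t \<in> {0..<T}"
    with B near[of t] show "norm (x t) \<le> max B (real n)" by (cases "t \<le> max 0 t1") force+
  qed
qed (use that in auto)

locale closed_loop =
  fixes f :: "(real^'n) \<times> real \<Rightarrow> real^'n" and g :: "real^'n \<Rightarrow> real"
    and umin umax k \<tau>p r u0 :: real and x0 :: "real^'n"
  assumes umin_less: "umin < umax"
    and f_lipschitz: "\<And>K. compact K \<Longrightarrow> \<exists>L. L-lipschitz_on K f"
    and g_lipschitz: "\<And>K. compact K \<Longrightarrow> \<exists>L. L-lipschitz_on K g"
begin

lemma f_continuous: "continuous_on UNIV f"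
  by (rule continuous_if_lipschitz_on_compacts[OF f_lipschitz])

lemma g_continuous: "continuous_on UNIV g"
  by (rule continuous_if_lipschitz_on_compacts[OF g_lipschitz])

definition integrator_input :: "(real \<Rightarrow> real^'n) \<Rightarrow> real \<Rightarrow> real" where
  "integrator_input x s = k * (r - g (x s))"

definition integrator_state :: "real \<Rightarrow> (real \<Rightarrow> real^'n) \<Rightarrow> real \<Rightarrow> real" where
  "integrator_state b x = sat_traj umin umax b u0 (integrator_input x)"

definition loop_field :: "real \<Rightarrow> (real \<Rightarrow> real^'n) \<Rightarrow> real \<Rightarrow> real^'n" where
  "loop_field b x s = f (x s, integrator_state b x s + \<tau>p * k * (r - g (x s)))"

text \<open>The closed loop on [0,b] as an integral equation in the plant state alone: the integrator
  state is the function \<open>integrator_state b x\<close> of the plant trajectory.\<close>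
definition integral_solution :: "real \<Rightarrow> (real \<Rightarrow> real^'n) \<Rightarrow> bool" where
  "integral_solution b x \<longleftrightarrow>
     continuous_on {0..b} x \<and> (\<forall>t\<in>{0..b}. x t = x0 + integral {0..t} (loop_field b x))"

lemma continuous_on_integrator_input:
  "continuous_on S x \<Longrightarrow> continuous_on S (integrator_input x)"
  unfolding integrator_input_def
  by (intro continuous_intros continuous_on_compose2[OF g_continuous]) auto

lemma integrator_state_traj:
  "0 \<le> b \<Longrightarrow> continuous_on {0..b} x \<Longrightarrow>
    sat_traj_on umin umax b u0 (integrator_input x) (integrator_state b x)"
  unfolding integrator_state_def
  by (intro sat_traj_on_sat_traj umin_less continuous_on_integrator_input)

lemma continuous_on_integrator_state:
  "0 \<le> b \<Longrightarrow> continuous_on {0..b} x \<Longrightarrow> continuous_on {0..b} (integrator_state b x)"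
  by (rule sat_traj_on_continuous[OF umin_less _ continuous_on_integrator_input integrator_state_traj])

lemma continuous_on_loop_field:
  assumes "0 \<le> b" and "continuous_on {0..b} x"
  shows "continuous_on {0..b} (loop_field b x)"
proof -
  have "continuous_on {0..b} (\<lambda>s. (x s, integrator_state b x s + \<tau>p * k * (r - g (x s))))"
    using assms by (intro continuous_intros continuous_on_integrator_state
        continuous_on_compose2[OF g_continuous]) auto
  then show ?thesis
    unfolding loop_field_def by (rule continuous_on_compose2[OF f_continuous]) auto
qed

lemma integrator_state_causal:
  assumes ab: "0 \<le> a" "a \<le> b" and x1: "continuous_on {0..a} x1" and x2: "continuous_on {0..b} x2"
    and eq: "\<forall>s\<in>{0..a}. x2 s = x1 s" and s: "s \<in> {0..a}"
  shows "integrator_state b x2 s = integrator_state a x1 s"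
proof -
  have "sat_traj_on umin umax a u0 (integrator_input x2) (integrator_state b x2)"
    using ab by (intro sat_traj_on_restrict[OF umin_less _ _ integrator_state_traj[OF _ x2]]
        continuous_on_integrator_input x2) auto
  then have "sat_traj_on umin umax a u0 (integrator_input x1) (integrator_state b x2)"
    by (rule sat_traj_on_cong[OF _ continuous_on_integrator_input[OF x1]])
       (use eq in \<open>auto simp: integrator_input_def\<close>)
  then show ?thesis
    by (rule sat_traj_on_unique[OF umin_less ab(1) continuous_on_integrator_input[OF x1] _
          integrator_state_traj[OF ab(1) x1] s])
qed

lemma loop_field_causal:
  assumes "0 \<le> a" "a \<le> b" "continuous_on {0..a} x1" "continuous_on {0..b} x2"
    and "\<forall>s\<in>{0..a}. x2 s = x1 s" and "s \<in> {0..a}"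
  shows "loop_field b x2 s = loop_field a x1 s"
  using integrator_state_causal[OF assms] assms(5,6) by (simp add: loop_field_def)

lemma integrator_state_bound:
  assumes b: "0 \<le> b" and x: "continuous_on {0..b} x" and G: "\<forall>\<sigma>\<in>{0..b}. \<bar>g (x \<sigma>)\<bar> \<le> G"
    and s: "s \<in> {0..b}"
  shows "\<bar>integrator_state b x s\<bar> \<le> \<bar>u0\<bar> + b * (\<bar>k\<bar> * (\<bar>r\<bar> + G))"
proof -
  have "\<bar>integrator_input x \<sigma>\<bar> \<le> \<bar>k\<bar> * (\<bar>r\<bar> + G)" if "\<sigma> \<in> {0..b}" for \<sigma>
  proof -
    have "\<bar>r - g (x \<sigma>)\<bar> \<le> \<bar>r\<bar> + G" using abs_triangle_ineq4[of r "g (x \<sigma>)"] bspec[OF G that] by linarith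
    then show ?thesis by (auto simp: integrator_input_def abs_mult intro!: mult_left_mono)
  qed
  note bound = this
  have cont: "continuous_on {0..s} (\<lambda>\<sigma>. \<bar>integrator_input x \<sigma>\<bar>)"
    using s by (intro continuous_intros continuous_on_integrator_input continuous_on_subset[OF x]) auto
  have "integral {0..s} (\<lambda>\<sigma>. \<bar>integrator_input x \<sigma>\<bar>)
      \<le> norm (integral {0..s} (\<lambda>\<sigma>. \<bar>integrator_input x \<sigma>\<bar>))"
    by simp
  also have "\<dots> \<le> \<bar>k\<bar> * (\<bar>r\<bar> + G) * (s - 0)"
    using s by (intro integral_bound cont) (auto intro: bound)
  also have "\<dots> \<le> b * (\<bar>k\<bar> * (\<bar>r\<bar> + G))"
  proof -
    have "0 \<le> G" using G b by force
    with s show ?thesis by (simp add: mult.commute mult_right_mono)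
  qed
  finally show ?thesis
    using sat_traj_on_deviation[OF umin_less b continuous_on_integrator_input[OF x]
        integrator_state_traj[OF b x] s] by linarith
qed

lemma integrator_state_diff:
  assumes b: "0 \<le> b" and x1: "continuous_on {0..b} x1" and x2: "continuous_on {0..b} x2"
    and s: "s \<in> {0..b}" and E: "\<forall>\<sigma>\<in>{0..s}. \<bar>g (x1 \<sigma>) - g (x2 \<sigma>)\<bar> \<le> E"
  shows "\<bar>integrator_state b x1 s - integrator_state b x2 s\<bar> \<le> b * (\<bar>k\<bar> * E)"
proof -
  have cont: "continuous_on {0..s} (\<lambda>\<sigma>. \<bar>integrator_input x1 \<sigma> - integrator_input x2 \<sigma>\<bar>)"
    using s by (intro continuous_intros continuous_on_integrator_input continuous_on_subset[OF x1]
        continuous_on_subset[OF x2]) auto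
  have "\<bar>integrator_input x1 \<sigma> - integrator_input x2 \<sigma>\<bar> \<le> \<bar>k\<bar> * E" if "\<sigma> \<in> {0..s}" for \<sigma>
  proof -
    have "integrator_input x1 \<sigma> - integrator_input x2 \<sigma> = k * (g (x2 \<sigma>) - g (x1 \<sigma>))"
      by (simp add: integrator_input_def algebra_simps)
    with bspec[OF E that] show ?thesis by (simp add: abs_mult abs_minus_commute mult_left_mono)
  qed
  note bound = this
  have "integral {0..s} (\<lambda>\<sigma>. \<bar>integrator_input x1 \<sigma> - integrator_input x2 \<sigma>\<bar>)
      \<le> norm (integral {0..s} (\<lambda>\<sigma>. \<bar>integrator_input x1 \<sigma> - integrator_input x2 \<sigma>\<bar>))"
    by simp
  also have "\<dots> \<le> \<bar>k\<bar> * E * (s - 0)"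
    using s by (intro integral_bound cont) (auto intro: bound)
  also have "\<dots> \<le> b * (\<bar>k\<bar> * E)"
  proof -
    have "0 \<le> E" using E s by force
    with s show ?thesis by (simp add: mult.commute mult_right_mono)
  qed
  finally show ?thesis
    using sat_traj_on_L1_contraction[OF umin_less b continuous_on_integrator_input[OF x1]
        continuous_on_integrator_input[OF x2] integrator_state_traj[OF b x1]
        integrator_state_traj[OF b x2] s] by linarith
qed

lemma loop_field_argument_bounded:
  obtains V where "\<And>b x s. 0 \<le> b \<Longrightarrow> b \<le> T \<Longrightarrow> continuous_on {0..b} x \<Longrightarrow>
    \<forall>\<sigma>\<in>{0..b}. x \<sigma> \<in> cball 0 R \<Longrightarrow> s \<in> {0..b} \<Longrightarrow>
    (x s, integrator_state b x s + \<tau>p * k * (r - g (x s))) \<in> cball 0 V"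
proof -
  have "bounded (g ` cball 0 R)"
    by (rule compact_imp_bounded[OF compact_continuous_image[OF continuous_on_subset[OF g_continuous]]])
       auto
  then obtain G where "G > 0" and G: "\<And>z. z \<in> cball 0 R \<Longrightarrow> \<bar>g z\<bar> \<le> G"
    unfolding bounded_pos by auto
  define V where "V = R + (\<bar>u0\<bar> + \<bar>T\<bar> * (\<bar>k\<bar> * (\<bar>r\<bar> + G))) + \<bar>\<tau>p * k\<bar> * (\<bar>r\<bar> + G)"
  show thesis
  proof (rule that[of V])
    fix b s :: real and x :: "real \<Rightarrow> real^'n"
    assume b: "0 \<le> b" "b \<le> T" and x: "continuous_on {0..b} x"
      and R: "\<forall>\<sigma>\<in>{0..b}. x \<sigma> \<in> cball 0 R" and s: "s \<in> {0..b}"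
    have "\<bar>integrator_state b x s\<bar> \<le> \<bar>u0\<bar> + b * (\<bar>k\<bar> * (\<bar>r\<bar> + G))"
      using R G by (intro integrator_state_bound[OF b(1) x _ s]) auto
    also have "\<dots> \<le> \<bar>u0\<bar> + \<bar>T\<bar> * (\<bar>k\<bar> * (\<bar>r\<bar> + G))"
      using b \<open>G > 0\<close> by (intro add_left_mono mult_right_mono) auto
    finally have "\<bar>integrator_state b x s\<bar> \<le> \<bar>u0\<bar> + \<bar>T\<bar> * (\<bar>k\<bar> * (\<bar>r\<bar> + G))" .
    moreover have "\<bar>\<tau>p * k * (r - g (x s))\<bar> \<le> \<bar>\<tau>p * k\<bar> * (\<bar>r\<bar> + G)"
      using abs_triangle_ineq4[of r "g (x s)"] G[of "x s"] R s
      by (auto simp: abs_mult intro!: mult_left_mono)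
    moreover have "norm (x s) \<le> R" using R s by auto
    ultimately show "(x s, integrator_state b x s + \<tau>p * k * (r - g (x s))) \<in> cball 0 V"
      using norm_Pair_le[of "x s"] abs_triangle_ineq[of "integrator_state b x s"]
      unfolding V_def mem_cball_0 by (smt (verit) real_norm_def)
  qed
qed

lemma loop_field_bounded:
  obtains M where "0 \<le> M" and "\<And>b x s. 0 \<le> b \<Longrightarrow> b \<le> T \<Longrightarrow> continuous_on {0..b} x \<Longrightarrow>
    \<forall>\<sigma>\<in>{0..b}. x \<sigma> \<in> cball 0 R \<Longrightarrow> s \<in> {0..b} \<Longrightarrow> norm (loop_field b x s) \<le> M"
proof -
  obtain V where V: "\<And>b x s. 0 \<le> b \<Longrightarrow> b \<le> T \<Longrightarrow> continuous_on {0..b} x \<Longrightarrow>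
    \<forall>\<sigma>\<in>{0..b}. x \<sigma> \<in> cball 0 R \<Longrightarrow> s \<in> {0..b} \<Longrightarrow>
    (x s, integrator_state b x s + \<tau>p * k * (r - g (x s))) \<in> cball 0 V"
    using loop_field_argument_bounded[where T = T and R = R] by blast
  have "bounded (f ` cball 0 V)"
    by (rule compact_imp_bounded[OF compact_continuous_image[OF continuous_on_subset[OF f_continuous]]])
       auto
  then obtain M where "M > 0" and "\<And>z. z \<in> cball 0 V \<Longrightarrow> norm (f z) \<le> M"
    unfolding bounded_pos by auto
  with V show thesis by (intro that[of M]) (auto simp: loop_field_def)
qed

lemma loop_field_argument_diff:
  assumes Lg: "Lg-lipschitz_on (cball 0 R) g" and b: "0 \<le> b" "b \<le> T"
    and x: "continuous_on {0..b} x1" "continuous_on {0..b} x2"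
    and R: "\<forall>\<sigma>\<in>{0..b}. x1 \<sigma> \<in> cball 0 R" "\<forall>\<sigma>\<in>{0..b}. x2 \<sigma> \<in> cball 0 R"
    and s: "s \<in> {0..b}" and D: "\<forall>\<sigma>\<in>{0..s}. norm (x1 \<sigma> - x2 \<sigma>) \<le> D"
  shows "norm ((x1 s, integrator_state b x1 s + \<tau>p * k * (r - g (x1 s)))
      - (x2 s, integrator_state b x2 s + \<tau>p * k * (r - g (x2 s))))
    \<le> (1 + T * (\<bar>k\<bar> * Lg) + \<bar>\<tau>p * k\<bar> * Lg) * D"
proof -
  have "0 \<le> Lg" using Lg by (rule lipschitz_on_nonneg)
  have "norm (x1 0 - x2 0) \<le> D" using D s by simp
  then have "0 \<le> D" using norm_ge_zero order_trans by blast
  have g_diff: "\<bar>g (x1 \<sigma>) - g (x2 \<sigma>)\<bar> \<le> Lg * D" if "\<sigma> \<in> {0..s}" for \<sigma>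
  proof -
    have "\<bar>g (x1 \<sigma>) - g (x2 \<sigma>)\<bar> \<le> Lg * norm (x1 \<sigma> - x2 \<sigma>)"
      using lipschitz_on_normD[OF Lg] R s that by (simp add: real_norm_def)
    also have "\<dots> \<le> Lg * D" using D that \<open>0 \<le> Lg\<close> by (intro mult_left_mono) auto
    finally show ?thesis .
  qed
  define dI where "dI = integrator_state b x1 s - integrator_state b x2 s"
  define dG where "dG = \<tau>p * k * (g (x2 s) - g (x1 s))"
  have "\<bar>dI\<bar> \<le> b * (\<bar>k\<bar> * (Lg * D))"
    unfolding dI_def using g_diff by (intro integrator_state_diff[OF b(1) x s]) auto
  also have "\<dots> \<le> T * (\<bar>k\<bar> * Lg) * D"
    using b \<open>0 \<le> D\<close> \<open>0 \<le> Lg\<close> by (simp add: mult.assoc mult_right_mono)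
  finally have dI: "\<bar>dI\<bar> \<le> T * (\<bar>k\<bar> * Lg) * D" .
  have dG: "\<bar>dG\<bar> \<le> \<bar>\<tau>p * k\<bar> * (Lg * D)"
    unfolding dG_def using g_diff[of s] s by (simp add: abs_mult abs_minus_commute mult_left_mono)
  have "(x1 s, integrator_state b x1 s + \<tau>p * k * (r - g (x1 s)))
      - (x2 s, integrator_state b x2 s + \<tau>p * k * (r - g (x2 s))) = (x1 s - x2 s, dI + dG)"
    by (simp add: dI_def dG_def algebra_simps)
  moreover have "norm (x1 s - x2 s, dI + dG) \<le> norm (x1 s - x2 s) + \<bar>dI + dG\<bar>"
    by (metis norm_Pair_le real_norm_def)
  moreover have "norm (x1 s - x2 s) \<le> D" using D s by auto
  ultimately show ?thesis using dI dG abs_triangle_ineq[of dI dG] by (simp add: algebra_simps)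
qed

lemma loop_field_lipschitz:
  assumes "0 \<le> T"
  obtains C where "0 \<le> C" and "\<And>b x1 x2 s D. 0 \<le> b \<Longrightarrow> b \<le> T \<Longrightarrow>
    continuous_on {0..b} x1 \<Longrightarrow> continuous_on {0..b} x2 \<Longrightarrow>
    \<forall>\<sigma>\<in>{0..b}. x1 \<sigma> \<in> cball 0 R \<Longrightarrow> \<forall>\<sigma>\<in>{0..b}. x2 \<sigma> \<in> cball 0 R \<Longrightarrow> s \<in> {0..b} \<Longrightarrow>
    \<forall>\<sigma>\<in>{0..s}. norm (x1 \<sigma> - x2 \<sigma>) \<le> D \<Longrightarrow> norm (loop_field b x1 s - loop_field b x2 s) \<le> C * D"
proof -
  obtain V where V: "\<And>b x s. 0 \<le> b \<Longrightarrow> b \<le> T \<Longrightarrow> continuous_on {0..b} x \<Longrightarrow>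
    \<forall>\<sigma>\<in>{0..b}. x \<sigma> \<in> cball 0 R \<Longrightarrow> s \<in> {0..b} \<Longrightarrow>
    (x s, integrator_state b x s + \<tau>p * k * (r - g (x s))) \<in> cball 0 V"
    using loop_field_argument_bounded[where T = T and R = R] by blast
  obtain Lf where Lf: "Lf-lipschitz_on (cball 0 V) f" using f_lipschitz compact_cball by blast
  obtain Lg where Lg: "Lg-lipschitz_on (cball 0 R) g" using g_lipschitz compact_cball by blast
  have nonneg: "0 \<le> Lf" "0 \<le> Lg" using Lf Lg by (auto intro: lipschitz_on_nonneg)
  show thesis
  proof (rule that[of "Lf * (1 + T * (\<bar>k\<bar> * Lg) + \<bar>\<tau>p * k\<bar> * Lg)"])
    show "0 \<le> Lf * (1 + T * (\<bar>k\<bar> * Lg) + \<bar>\<tau>p * k\<bar> * Lg)" using nonneg assms by simp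
    fix b s D :: real and x1 x2 :: "real \<Rightarrow> real^'n"
    assume b: "0 \<le> b" "b \<le> T" and x: "continuous_on {0..b} x1" "continuous_on {0..b} x2"
      and R: "\<forall>\<sigma>\<in>{0..b}. x1 \<sigma> \<in> cball 0 R" "\<forall>\<sigma>\<in>{0..b}. x2 \<sigma> \<in> cball 0 R"
      and s: "s \<in> {0..b}" and D: "\<forall>\<sigma>\<in>{0..s}. norm (x1 \<sigma> - x2 \<sigma>) \<le> D"
    show "norm (loop_field b x1 s - loop_field b x2 s) \<le> Lf * (1 + T * (\<bar>k\<bar> * Lg) + \<bar>\<tau>p * k\<bar> * Lg) * D"
      using lipschitz_on_normD[OF Lf V[OF b x(1) R(1) s] V[OF b x(2) R(2) s]]
        loop_field_argument_diff[OF Lg b x R s D] nonneg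
      unfolding loop_field_def mult.assoc by (meson mult_left_mono order_trans)
  qed
qed

lemma integral_solution_step:
  assumes x: "integral_solution b x" and at: "0 \<le> a" "a \<le> t" "t \<le> b"
  shows "x t = x a + integral {a..t} (loop_field b x)"
proof -
  have "loop_field b x integrable_on {0..t}"
    using x at by (intro integrable_continuous_real continuous_on_subset[OF continuous_on_loop_field])
      (auto simp: integral_solution_def)
  then have "integral {0..a} (loop_field b x) + integral {a..t} (loop_field b x)
      = integral {0..t} (loop_field b x)"
    using at by (intro Henstock_Kurzweil_Integration.integral_combine) auto
  moreover have "x t = x0 + integral {0..t} (loop_field b x)" "x a = x0 + integral {0..a} (loop_field b x)"
    using x at by (auto simp: integral_solution_def)
  ultimately show ?thesis by (simp add: algebra_simps)
qed

lemma integral_solution_bounded: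
  assumes "integral_solution b x"
  obtains R where "\<forall>\<sigma>\<in>{0..b}. x \<sigma> \<in> cball 0 R"
proof -
  have "bounded (x ` {0..b})"
    using assms by (intro compact_imp_bounded compact_continuous_image) (auto simp: integral_solution_def)
  then show thesis using that by (auto simp: bounded_iff mem_cball_0)
qed

lemma integral_solution_unique:
  assumes x1: "integral_solution b x1" and x2: "integral_solution b x2" and t: "t \<in> {0..b}"
  shows "x1 t = x2 t"
proof -
  have b: "0 \<le> b" and c: "continuous_on {0..b} x1" "continuous_on {0..b} x2"
    using t x1 x2 by (auto simp: integral_solution_def)
  obtain R1 where R1: "\<forall>\<sigma>\<in>{0..b}. x1 \<sigma> \<in> cball 0 R1" by (rule integral_solution_bounded[OF x1])
  obtain R2 where R2: "\<forall>\<sigma>\<in>{0..b}. x2 \<sigma> \<in> cball 0 R2" by (rule integral_solution_bounded[OF x2])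
  have R: "\<forall>\<sigma>\<in>{0..b}. x1 \<sigma> \<in> cball 0 (max R1 R2)" "\<forall>\<sigma>\<in>{0..b}. x2 \<sigma> \<in> cball 0 (max R1 R2)"
    using R1 R2 by auto
  obtain C where "0 \<le> C" and C_all: "\<And>b' y1 y2 s D. 0 \<le> b' \<Longrightarrow> b' \<le> b \<Longrightarrow>
    continuous_on {0..b'} y1 \<Longrightarrow> continuous_on {0..b'} y2 \<Longrightarrow>
    \<forall>\<sigma>\<in>{0..b'}. y1 \<sigma> \<in> cball 0 (max R1 R2) \<Longrightarrow> \<forall>\<sigma>\<in>{0..b'}. y2 \<sigma> \<in> cball 0 (max R1 R2) \<Longrightarrow>
    s \<in> {0..b'} \<Longrightarrow> \<forall>\<sigma>\<in>{0..s}. norm (y1 \<sigma> - y2 \<sigma>) \<le> D \<Longrightarrow>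
    norm (loop_field b' y1 s - loop_field b' y2 s) \<le> C * D"
    using loop_field_lipschitz[OF b, where R = "max R1 R2"] by blast
  note C = C_all[OF b order_refl c R]
  show ?thesis
  proof (rule eq_if_causal_lipschitz[OF c _ \<open>0 \<le> C\<close> _ t])
    show "x1 0 = x2 0" using x1 x2 b by (simp add: integral_solution_def)
    fix a t D
    assume at: "0 \<le> a" "a \<le> t" "t \<le> b" and eq: "\<forall>\<sigma>\<in>{0..a}. x1 \<sigma> = x2 \<sigma>"
      and D: "\<forall>\<sigma>\<in>{0..t}. norm (x1 \<sigma> - x2 \<sigma>) \<le> D"
    have F: "continuous_on {a..t} (loop_field b x1)" "continuous_on {a..t} (loop_field b x2)"
      using at by (auto intro: continuous_on_subset[OF continuous_on_loop_field[OF b]] c)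
    have "x1 t - x2 t = integral {a..t} (\<lambda>s. loop_field b x1 s - loop_field b x2 s)"
      using integral_solution_step[OF x1 at] integral_solution_step[OF x2 at] eq at F
      by (simp add: integral_diff integrable_continuous_real)
    also have "norm \<dots> \<le> C * D * (t - a)"
      using at D by (intro integral_bound continuous_intros F C) auto
    finally show "norm (x1 t - x2 t) \<le> C * D * (t - a)" .
  qed
qed

lemma integral_solution_append:
  assumes ab: "0 \<le> a" "a \<le> b" and x: "integral_solution a x" and y: "continuous_on {0..b} y"
    and hist: "\<forall>t\<in>{0..a}. y t = x t"
    and new: "\<forall>t\<in>{a..b}. y t = x a + integral {a..t} (loop_field b y)"
  shows "integral_solution b y"
  unfolding integral_solution_def
proof (intro conjI ballI y)
  have x_cont: "continuous_on {0..a} x" using x by (simp add: integral_solution_def)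
  have same: "integral {0..t} (loop_field b y) = integral {0..t} (loop_field a x)" if "t \<in> {0..a}" for t
    using that by (intro integral_cong loop_field_causal[OF ab x_cont y hist]) auto
  fix t assume t: "t \<in> {0..b}"
  show "y t = x0 + integral {0..t} (loop_field b y)"
  proof (cases "t \<le> a")
    case True
    with t x hist same show ?thesis by (simp add: integral_solution_def)
  next
    case False
    have "loop_field b y integrable_on {0..t}"
      using t by (intro integrable_continuous_real continuous_on_subset[OF continuous_on_loop_field[OF _ y]]) auto
    then have "integral {0..a} (loop_field b y) + integral {a..t} (loop_field b y) = integral {0..t} (loop_field b y)"
      using ab False by (intro Henstock_Kurzweil_Integration.integral_combine) auto
    moreover have "x a = x0 + integral {0..a} (loop_field b y)"
      using x ab same[of a] by (simp add: integral_solution_def)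
    ultimately show ?thesis using new t False by (simp add: algebra_simps)
  qed
qed

lemma integral_solution_extend:
  assumes a: "0 \<le> a" and x: "integral_solution a x"
  obtains h y where "0 < h" and "integral_solution (a + h) y" and "\<forall>t\<in>{0..a}. y t = x t"
proof -
  obtain B where B: "\<forall>\<sigma>\<in>{0..a}. x \<sigma> \<in> cball 0 B" by (rule integral_solution_bounded[OF x])
  define R where "R = B + 1"
  have a1: "0 \<le> a + 1" using a by simp
  obtain M where "0 \<le> M" and M: "\<And>b y s. 0 \<le> b \<Longrightarrow> b \<le> a + 1 \<Longrightarrow> continuous_on {0..b} y \<Longrightarrow>
      \<forall>\<sigma>\<in>{0..b}. y \<sigma> \<in> cball 0 R \<Longrightarrow> s \<in> {0..b} \<Longrightarrow> norm (loop_field b y s) \<le> M"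
    using loop_field_bounded[where T = "a + 1" and R = R] by blast
  obtain C where "0 \<le> C" and C: "\<And>b y1 y2 s D. 0 \<le> b \<Longrightarrow> b \<le> a + 1 \<Longrightarrow>
      continuous_on {0..b} y1 \<Longrightarrow> continuous_on {0..b} y2 \<Longrightarrow>
      \<forall>\<sigma>\<in>{0..b}. y1 \<sigma> \<in> cball 0 R \<Longrightarrow> \<forall>\<sigma>\<in>{0..b}. y2 \<sigma> \<in> cball 0 R \<Longrightarrow> s \<in> {0..b} \<Longrightarrow>
      \<forall>\<sigma>\<in>{0..s}. norm (y1 \<sigma> - y2 \<sigma>) \<le> D \<Longrightarrow> norm (loop_field b y1 s - loop_field b y2 s) \<le> C * D"
    using loop_field_lipschitz[OF a1, where R = R] by blast
  define h where "h = min 1 (min (1 / (M + 1)) (1 / (2 * (C + 1))))"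
  have h: "0 < h" "h \<le> 1" using \<open>0 \<le> M\<close> \<open>0 \<le> C\<close> by (auto simp: h_def)
  have "h * M \<le> 1 / (M + 1) * M" using \<open>0 \<le> M\<close> by (intro mult_right_mono) (auto simp: h_def)
  also have "\<dots> \<le> 1" using \<open>0 \<le> M\<close> by (simp add: field_simps)
  finally have hM: "h * M \<le> 1" .
  have "h * C \<le> 1 / (2 * (C + 1)) * C" using \<open>0 \<le> C\<close> by (intro mult_right_mono) (auto simp: h_def)
  also have "\<dots> \<le> 1 / 2" using \<open>0 \<le> C\<close> by (simp add: field_simps)
  finally have hC: "h * C \<le> 1 / 2" .
  have ah: "0 \<le> a + h" "a \<le> a + h" "a + h \<le> a + 1" using a h by auto
  have Y_cont: "continuous_on {0..a + h} y" if "follows_history a h x y" for y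
    using that by (auto simp: follows_history_def intro: continuous_on_subset)
  have Y_ball: "\<forall>\<sigma>\<in>{0..a + h}. y \<sigma> \<in> cball 0 R" if "follows_history a h x y" for y
    using follows_history_cball[OF that B a] by (simp add: R_def)
  have G_cont: "continuous_on {a..a + h} (loop_field (a + h) y)" if "follows_history a h x y" for y
    by (rule continuous_on_subset[OF continuous_on_loop_field[OF ah(1) Y_cont[OF that]]]) (use a in auto)
  have G_bound: "norm (loop_field (a + h) y s) \<le> M" if "follows_history a h x y" "s \<in> {a..a + h}" for y s
    using that a by (intro M[OF ah(1,3) Y_cont Y_ball]) auto
  have G_lipschitz: "norm (loop_field (a + h) y1 s - loop_field (a + h) y2 s) \<le> C * D"
    if "follows_history a h x y1" "follows_history a h x y2" "s \<in> {a..a + h}"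
      "\<forall>\<sigma>. norm (y1 \<sigma> - y2 \<sigma>) \<le> D" for y1 y2 s D
    using that a by (intro C[OF ah(1,3) Y_cont Y_cont Y_ball Y_ball]) auto
  have x_cont: "continuous_on {0..a} x" using x by (simp add: integral_solution_def)
  obtain y where y: "follows_history a h x y"
    and new: "\<forall>t\<in>{a..a + h}. y t = x a + integral {a..t} (loop_field (a + h) y)"
    by (rule integral_equation_local_solution[OF a h(1) x_cont G_cont G_bound G_lipschitz hM hC])
  have "integral_solution (a + h) y"
    by (rule integral_solution_append[OF a ah(2) x Y_cont[OF y] _ new])
       (use y in \<open>simp add: follows_history_def\<close>)
  then show thesis using h y by (intro that) (auto simp: follows_history_def)
qed

lemma cl_traj_imp_integral_solution:
  assumes cl: "cl_traj f g umin umax k \<tau>p r x0 u0 \<tau> x u" and t: "0 \<le> t" "ereal t < \<tau>"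
  shows "integral_solution t x" and "\<forall>s\<in>{0..t}. u s = integrator_state t x s"
proof -
  have "{0..t} \<subseteq> {s. 0 \<le> s \<and> ereal s < \<tau>}"
  proof
    fix s assume "s \<in> {0..t}"
    then have "0 \<le> s" "ereal s \<le> ereal t" by auto
    moreover from this(2) t(2) have "ereal s < \<tau>" by (rule order.strict_trans1)
    ultimately show "s \<in> {s. 0 \<le> s \<and> ereal s < \<tau>}" by simp
  qed
  then have der: "(x has_vector_derivative f (x s, u s + \<tau>p * k * (r - g (x s)))) (at s within {0..t})"
    if "s \<in> {0..t}" for s
    using cl that unfolding cl_traj_def by (blast intro: has_vector_derivative_within_subset)
  have x_cont: "continuous_on {0..t} x"
    unfolding continuous_on_eq_continuous_within using der has_vector_derivative_continuous by blast
  have "sat_traj_on umin umax t u0 (integrator_input x) u"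
    using cl t unfolding cl_traj_def integrator_input_def[abs_def] by auto
  then show u: "\<forall>s\<in>{0..t}. u s = integrator_state t x s"
    using sat_traj_on_unique[OF umin_less t(1) continuous_on_integrator_input[OF x_cont] _
        integrator_state_traj[OF t(1) x_cont]] by blast
  show "integral_solution t x"
    unfolding integral_solution_def
  proof (intro conjI ballI x_cont)
    fix t' assume t': "t' \<in> {0..t}"
    have "((\<lambda>s. f (x s, u s + \<tau>p * k * (r - g (x s)))) has_integral (x t' - x 0)) {0..t'}"
      using t' by (intro fundamental_theorem_of_calculus) (auto intro: has_vector_derivative_within_subset[OF der])
    then have "(loop_field t x has_integral (x t' - x 0)) {0..t'}"
      by (rule has_integral_eq[rotated]) (use u t' in \<open>auto simp: loop_field_def\<close>)
    moreover have "x 0 = x0" using cl by (simp add: cl_traj_def)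
    ultimately show "x t' = x0 + integral {0..t'} (loop_field t x)"
      by (simp add: integral_unique)
  qed
qed

lemma integral_solution_imp_cl_traj:
  assumes b: "0 < b" and x: "integral_solution b x"
  shows "cl_traj f g umin umax k \<tau>p r x0 u0 (ereal b) x (integrator_state b x)"
  unfolding cl_traj_def
proof (intro conjI allI impI)
  have b0: "0 \<le> b" and x_cont: "continuous_on {0..b} x" using b x by (auto simp: integral_solution_def)
  show "x 0 = x0" using x b0 by (simp add: integral_solution_def)
  show "integrator_state b x 0 = u0"
    by (rule sat_traj_on_initial[OF umin_less b0 continuous_on_integrator_input[OF x_cont]
          integrator_state_traj[OF b0 x_cont]])
  fix t assume "0 \<le> t \<and> ereal t < ereal b"
  then have t: "t \<in> {0..b}" by auto
  have "((\<lambda>s. x0 + integral {0..s} (loop_field b x)) has_vector_derivative loop_field b x t)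
      (at t within {0..b})"
    using integral_has_vector_derivative[OF continuous_on_loop_field[OF b0 x_cont] t]
    by (auto intro!: derivative_eq_intros)
  then have "(x has_vector_derivative loop_field b x t) (at t within {0..b})"
    by (rule has_vector_derivative_transform[OF t, rotated]) (use x in \<open>auto simp: integral_solution_def\<close>)
  then show "(x has_vector_derivative f (x t, integrator_state b x t + \<tau>p * k * (r - g (x t))))
      (at t within {s. 0 \<le> s \<and> ereal s < ereal b})"
    unfolding loop_field_def by (rule has_vector_derivative_within_subset) auto
  have "sat_traj_on umin umax t u0 (integrator_input x) (integrator_state b x)"
    by (rule sat_traj_on_restrict[OF umin_less b0 continuous_on_integrator_input[OF x_cont]
          integrator_state_traj[OF b0 x_cont] t])
  then show "sat_traj_on umin umax t u0 (\<lambda>s. k * (r - g (x s))) (integrator_state b x)"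
    by (simp add: integrator_input_def[abs_def])
qed

lemma cl_traj_unique:
  assumes cl: "cl_traj f g umin umax k \<tau>p r x0 u0 \<tau> x u"
    and cl': "cl_traj f g umin umax k \<tau>p r x0 u0 \<tau>' x' u'"
    and t: "0 \<le> t" "ereal t < \<tau>" "ereal t < \<tau>'"
  shows "x t = x' t \<and> u t = u' t"
proof -
  note sol = cl_traj_imp_integral_solution[OF cl t(1,2)]
    and sol' = cl_traj_imp_integral_solution[OF cl' t(1,3)]
  have eq: "\<forall>s\<in>{0..t}. x' s = x s" using integral_solution_unique[OF sol'(1) sol(1)] by blast
  have "integrator_state t x' t = integrator_state t x t"
    by (rule integrator_state_causal[OF t(1) order_refl _ _ eq])
       (use sol sol' t(1) in \<open>auto simp: integral_solution_def\<close>)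
  with sol(2) sol'(2) eq t(1) show ?thesis by auto
qed

lemma cl_traj_lipschitz_if_bounded:
  assumes cl: "cl_traj f g umin umax k \<tau>p r x0 u0 (ereal T) x u"
    and B: "\<forall>t\<in>{0..<T}. x t \<in> cball 0 B"
  obtains M where "M-lipschitz_on {0..<T} x"
proof -
  obtain M where "0 \<le> M" and M: "\<And>b y s. 0 \<le> b \<Longrightarrow> b \<le> T \<Longrightarrow> continuous_on {0..b} y \<Longrightarrow>
      \<forall>\<sigma>\<in>{0..b}. y \<sigma> \<in> cball 0 B \<Longrightarrow> s \<in> {0..b} \<Longrightarrow> norm (loop_field b y s) \<le> M"
    using loop_field_bounded[where T = T and R = B] by blast
  have "M-lipschitz_on {0..<T} x"
  proof (rule lipschitz_on_leI[OF _ \<open>0 \<le> M\<close>])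
    fix s t assume st: "s \<in> {0..<T}" "t \<in> {0..<T}" "s \<le> t"
    then have sol: "integral_solution t x" using cl_traj_imp_integral_solution(1)[OF cl] by auto
    then have cont: "continuous_on {0..t} x" by (simp add: integral_solution_def)
    have "norm (integral {s..t} (loop_field t x)) \<le> M * (t - s)"
      using st B by (intro integral_bound continuous_on_subset[OF continuous_on_loop_field[OF _ cont]]
          M[OF _ _ cont]) auto
    with integral_solution_step[OF sol, of s t] st show "dist (x s) (x t) \<le> M * dist s t"
      by (simp add: dist_norm norm_minus_commute dist_real_def)
  qed
  then show thesis by (rule that)
qed

lemma cl_traj_bounded_imp_integral_solution:
  assumes T: "0 < T" and cl: "cl_traj f g umin umax k \<tau>p r x0 u0 (ereal T) x u"
    and B: "\<forall>t\<in>{0..<T}. x t \<in> cball 0 B"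
  obtains xT where "integral_solution T xT" and "\<forall>t\<in>{0..<T}. xT t = x t"
proof -
  obtain M where "M-lipschitz_on {0..<T} x" by (rule cl_traj_lipschitz_if_bounded[OF cl B])
  then obtain xT where lip: "M-lipschitz_on (closure {0..<T}) xT" and xT: "\<forall>t\<in>{0..<T}. xT t = x t"
    using lipschitz_extend_closure by blast
  have closure: "closure {0..<T} = {0..T}" using T by simp
  have xT_cont: "continuous_on {0..T} xT" using lipschitz_on_continuous_on[OF lip] closure by simp
  define h where "h t = xT t - (x0 + integral {0..t} (loop_field T xT))" for t
  have "loop_field T xT integrable_on {0..T}"
    using T by (intro integrable_continuous_real continuous_on_loop_field xT_cont) auto
  then have "continuous_on {0..T} h"
    unfolding h_def by (intro continuous_intros xT_cont indefinite_integral_continuous_1)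
  then have "closed {t \<in> {0..T}. h t = 0}"
    by (rule continuous_closed_preimage_constant[OF _ closed_atLeastAtMost])
  moreover have "{0..<T} \<subseteq> {t \<in> {0..T}. h t = 0}"
  proof
    fix t assume t: "t \<in> {0..<T}"
    then have sol: "integral_solution t x" using cl_traj_imp_integral_solution(1)[OF cl] by auto
    then have "continuous_on {0..t} x" by (simp add: integral_solution_def)
    then have "loop_field T xT s = loop_field t x s" if "s \<in> {0..t}" for s
      using t that xT by (intro loop_field_causal xT_cont) auto
    then have "integral {0..t} (loop_field t x) = integral {0..t} (loop_field T xT)"
      by (intro integral_cong) simp
    with sol t xT show "t \<in> {t \<in> {0..T}. h t = 0}" by (auto simp: h_def integral_solution_def)
  qed
  ultimately have "closure {0..<T} \<subseteq> {t \<in> {0..T}. h t = 0}" by (rule closure_minimal[rotated])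
  then have "integral_solution T xT" unfolding closure using xT_cont by (auto simp: integral_solution_def h_def)
  then show thesis using xT by (rule that)
qed

lemma local_well_posedness:
  "\<exists>\<tau>::ereal. \<tau> > 0 \<and>
     (\<exists>x u. cl_traj f g umin umax k \<tau>p r x0 u0 \<tau> x u) \<and>
     (\<forall>x u x' u'. cl_traj f g umin umax k \<tau>p r x0 u0 \<tau> x u \<and>
                  cl_traj f g umin umax k \<tau>p r x0 u0 \<tau> x' u' \<longrightarrow>
        (\<forall>t. 0 \<le> t \<and> ereal t < \<tau> \<longrightarrow> x t = x' t \<and> u t = u' t))"
proof -
  have "integral_solution 0 (\<lambda>_. x0)" by (simp add: integral_solution_def)
  then obtain h y where "0 < h" and y: "integral_solution (0 + h) y"
    using integral_solution_extend[OF order_refl] by blast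
  then have cl_y: "cl_traj f g umin umax k \<tau>p r x0 u0 (ereal h) y (integrator_state h y)"
    by (intro integral_solution_imp_cl_traj) auto
  show ?thesis
  proof (intro exI[of _ "ereal h"] conjI allI impI)
    show "ereal h > 0" using \<open>0 < h\<close> by simp
    show "\<exists>x u. cl_traj f g umin umax k \<tau>p r x0 u0 (ereal h) x u" using cl_y by blast
    fix x u x' u' t
    assume "cl_traj f g umin umax k \<tau>p r x0 u0 (ereal h) x u \<and>
      cl_traj f g umin umax k \<tau>p r x0 u0 (ereal h) x' u'" and "0 \<le> t \<and> ereal t < ereal h"
    then show "x t = x' t" "u t = u' t" using cl_traj_unique by blast+
  qed
qed

lemma blowup:
  assumes cl: "cl_traj f g umin umax k \<tau>p r x0 u0 (ereal T) x u"
    and maximal: "\<not> (\<exists>\<tau>'::ereal. \<tau>' > ereal T \<and>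
               (\<exists>x' u'. cl_traj f g umin umax k \<tau>p r x0 u0 \<tau>' x' u' \<and>
                  (\<forall>t\<in>{0..<T}. x' t = x t \<and> u' t = u t)))"
  shows "Limsup (at_left T) (\<lambda>t. ereal (norm (x t))) = \<infinity>"
proof (rule ccontr)
  assume finite: "Limsup (at_left T) (\<lambda>t. ereal (norm (x t))) \<noteq> \<infinity>"
  obtain z where z: "integral_solution (max T 0) z"
  proof (cases "0 < T")
    case True
    have cont: "continuous_on {0..t} x" if "0 \<le> t" "t < T" for t
      using cl_traj_imp_integral_solution(1)[OF cl that(1)] that by (simp add: integral_solution_def)
    obtain B where "\<forall>t\<in>{0..<T}. norm (x t) \<le> B"
      by (rule bounded_if_Limsup_at_left_finite[OF finite cont])
    then have "\<forall>t\<in>{0..<T}. x t \<in> cball 0 B" by simp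
    then obtain xT where "integral_solution T xT"
      using cl_traj_bounded_imp_integral_solution[OF True cl] by blast
    with True show thesis by (intro that) (simp add: max_def)
  next
    case False
    then show thesis by (intro that[of "\<lambda>_. x0"]) (simp add: integral_solution_def max_def)
  qed
  obtain h y where "0 < h" and y: "integral_solution (max T 0 + h) y"
    by (rule integral_solution_extend[OF _ z]) auto
  define \<tau>' where "\<tau>' = ereal (max T 0 + h)"
  have cl_y: "cl_traj f g umin umax k \<tau>p r x0 u0 \<tau>' y (integrator_state (max T 0 + h) y)"
    unfolding \<tau>'_def using \<open>0 < h\<close> y by (intro integral_solution_imp_cl_traj) auto
  have "\<forall>t\<in>{0..<T}. y t = x t \<and> integrator_state (max T 0 + h) y t = u t"
  proof
    fix t assume "t \<in> {0..<T}"
    then have "0 \<le> t" "ereal t < \<tau>'" "ereal t < ereal T" using \<open>0 < h\<close> by (auto simp: \<tau>'_def)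
    then show "y t = x t \<and> integrator_state (max T 0 + h) y t = u t" by (rule cl_traj_unique[OF cl_y cl])
  qed
  moreover have "\<tau>' > ereal T" using \<open>0 < h\<close> by (simp add: \<tau>'_def)
  ultimately show False using maximal cl_y by blast
qed

theorem well_posed:
  "(\<exists>\<tau>::ereal. \<tau> > 0 \<and>
     (\<exists>x u. cl_traj f g umin umax k \<tau>p r x0 u0 \<tau> x u) \<and>
     (\<forall>x u x' u'. cl_traj f g umin umax k \<tau>p r x0 u0 \<tau> x u \<and>
                  cl_traj f g umin umax k \<tau>p r x0 u0 \<tau> x' u' \<longrightarrow>
        (\<forall>t. 0 \<le> t \<and> ereal t < \<tau> \<longrightarrow> x t = x' t \<and> u t = u' t))) \<and>
   (\<forall>(T::real) x u.
      cl_traj f g umin umax k \<tau>p r x0 u0 (ereal T) x u \<and>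
      \<not> (\<exists>\<tau>'::ereal. \<tau>' > ereal T \<and>
           (\<exists>x' u'. cl_traj f g umin umax k \<tau>p r x0 u0 \<tau>' x' u' \<and>
              (\<forall>t\<in>{0..<T}. x' t = x t \<and> u' t = u t)))
      \<longrightarrow> Limsup (at_left T) (\<lambda>t. ereal (norm (x t))) = \<infinity>)"
  using local_well_posedness blowup by blast

end

theorem proposition1:
  fixes f :: "((real^'n) \<times> real) \<Rightarrow> real^'n"
    and g :: "real^'n \<Rightarrow> real"
    and umin umax :: real
  assumes umin_less: "umin < umax"
    and f_C2: "\<exists>f' f''.
        (\<forall>z. (f has_derivative blinfun_apply (f' z)) (at z)) \<and>
        (\<forall>z. (f' has_derivative blinfun_apply (f'' z)) (at z)) \<and>
        continuous_on UNIV f''"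
    and g_loc_lip: "\<forall>K. compact K \<longrightarrow> (\<exists>L. L-lipschitz_on K g)"
  shows "\<forall>(k::real) (\<tau>p::real) (x0::real^'n) (\<delta>::real) (u0::real) (r::real).
     k \<ge> 0 \<and> \<tau>p \<ge> 0 \<and> \<delta> > 0 \<and> u0 \<in> {umin - \<delta> .. umax + \<delta>} \<longrightarrow>
       (\<exists>\<tau>::ereal. \<tau> > 0 \<and>
          (\<exists>x u. cl_traj f g umin umax k \<tau>p r x0 u0 \<tau> x u) \<and>
          (\<forall>x u x' u'. cl_traj f g umin umax k \<tau>p r x0 u0 \<tau> x u \<and>
                       cl_traj f g umin umax k \<tau>p r x0 u0 \<tau> x' u' \<longrightarrow>
             (\<forall>t. 0 \<le> t \<and> ereal t < \<tau> \<longrightarrow> x t = x' t \<and> u t = u' t))) \<and>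
       (\<forall>(T::real) x u.
          cl_traj f g umin umax k \<tau>p r x0 u0 (ereal T) x u \<and>
          \<not> (\<exists>\<tau>'::ereal. \<tau>' > ereal T \<and>
               (\<exists>x' u'. cl_traj f g umin umax k \<tau>p r x0 u0 \<tau>' x' u' \<and>
                  (\<forall>t\<in>{0..<T}. x' t = x t \<and> u' t = u t)))
          \<longrightarrow> Limsup (at_left T) (\<lambda>t. ereal (norm (x t))) = \<infinity>)"
proof -
  obtain f' f'' where f': "\<forall>z. (f has_derivative blinfun_apply (f' z)) (at z)"
    and f'': "\<forall>z. (f' has_derivative blinfun_apply (f'' z)) (at z)"
    using f_C2 by blast
  have "continuous_on UNIV f'"
    using f'' by (intro continuous_at_imp_continuous_on) (blast intro: has_derivative_continuous)
  then have loop: "closed_loop f g umin umax"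
    by unfold_locales
      (use umin_less g_loc_lip lipschitz_on_compact_if_continuous_derivative[OF f'[rule_format]] in auto)
  show ?thesis by (intro allI impI) (rule closed_loop.well_posed[OF loop])
qed

end
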